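(* Let $X,Y,A,B$ be non-empty finite sets. Then $\mathcal R_{\rm lowc}$ is a resource over $(X\times Y,A\times B)$ and $\mathsf{QC}(\mathcal R_{\rm lowc})=\mathcal Q_{\rm lowc}$.
   Context: For $n\in\mathbb N$, finite sets $S_i,T_i$, operators $U_i:\mathbb C^X\to\mathbb C^A\otimes\mathbb C^{S_i}$ with $\sum_{i=1}^nU_i^*U_i=I_X$ and isometries $V_i:\mathbb C^Y\to\mathbb C^B\otimes\mathbb C^{T_i}$, the column $[U_i\otimes V_i]_{i=1}^n:\mathbb C^{XY}\to\bigoplus_i\mathbb C^{AB}\otimes\mathbb C^{S_i}\otimes\mathbb C^{T_i}\cong\mathbb C^{AB}\otimes K$ with $K=\bigoplus_i\mathbb C^{S_i}\otimes\mathbb C^{T_i}$ is an isometry, regarded as a block operator isometry over $(XY,AB)$ with entries in $\mathcal B(\mathbb C,K)$. $\mathcal R_{\rm lowc}$ is the set of all finite entrywise direct sums of such isometries. A block operator isometry over $(Z,C)$ is an isometry $W=(W_{c,z}):H^Z\to L^C$; $\phi_W:\mathcal S_1^{C,Z}\to\mathcal B(H,L)$, $\phi_W(e_ze_c^* )=W_{c,z}$; for a normal state $\sigma$, $\Gamma_{W,\sigma}(\epsilon_{z,z'})=\sum_{c,c'}\sigma(W_{c,z}^*W_{c',z'})\epsilon_{c,c'}$ and $\mathsf{QC}(\mathcal R)=\{\Gamma_{W,\sigma}:W\in\mathcal R\}$. A resource over $(Z,C)$ is a family of block operator isometries closed under finite entrywise direct sums and separating: for every nonzero $S\in\mathcal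 S_1^{C,Z}$ (operators $\mathbb C^C\to\mathbb C^Z$) some $W$ in the family has $\phi_W(S)\neq0$. $\mathcal Q_{\rm lowc}$ is the set of channels $\Gamma=\sum_{i=1}^n\Psi_i\otimes\Phi_i:M_{XY}\to M_{AB}$, where $\Psi_i:M_X\to M_A$ are completely positive with $\sum_i\Psi_i$ trace preserving and $\Phi_i:M_Y\to M_B$ are quantum channels. *)

theory Defs
  imports "Jordan_Normal_Form.Matrix"
begin

(* Finite index sets are represented by their cardinalities
   (a set of size n is {0..<n}).  Products are ordered lexicographically:
   (x,y) in X x Y  <-->  x * card Y + y.  Tensor products of coordinate
   spaces use the same (Kronecker) ordering. *)

definition adj :: "complex mat \<Rightarrow> complex mat" where
  "adj M = mat (dim_col M) (dim_row M) (\<lambda>(i,j). cnj (M $$ (j,i)))"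

definition mtrace :: "complex mat \<Rightarrow> complex" where
  "mtrace M = (\<Sum>i<dim_row M. M $$ (i,i))"

definition psd :: "nat \<Rightarrow> complex mat \<Rightarrow> bool" where
  "psd n P \<longleftrightarrow> P \<in> carrier_mat n n \<and>
     (\<forall>v \<in> carrier_vec n. let q = (\<Sum>i<n. cnj (v $ i) * (P *\<^sub>v v) $ i)
                             in Im q = 0 \<and> Re q \<ge> 0)"

text \<open>density matrices = normal states on B(C^n): sigma(T) = trace(D T)\<close>
definition density :: "nat \<Rightarrow> complex mat \<Rightarrow> bool" where
  "density n D \<longleftrightarrow> psd n D \<and> mtrace D = 1"

definition munit :: "nat \<Rightarrow> nat \<Rightarrow> nat \<Rightarrow> complex mat" where
  "munit n i j = mat n n (\<lambda>(a,b). if a = i \<and> b = j then 1 else 0)"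

definition kron :: "nat \<Rightarrow> nat \<Rightarrow> complex mat \<Rightarrow> complex mat \<Rightarrow> complex mat" where
  "kron m k M N = mat (m*k) (m*k) (\<lambda>(r,s). M $$ (r div k, s div k) * N $$ (r mod k, s mod k))"

type_synonym lmap = "complex mat \<Rightarrow> complex mat"

definition is_lmap :: "nat \<Rightarrow> nat \<Rightarrow> lmap \<Rightarrow> bool" where
  "is_lmap n m \<Psi> \<longleftrightarrow> (\<forall>\<rho> \<in> carrier_mat n n. \<Psi> \<rho> \<in> carrier_mat m m) \<and>
     (\<forall>\<rho> \<in> carrier_mat n n. \<forall>\<sigma> \<in> carrier_mat n n. \<forall>c::complex.
        \<Psi> (c \<cdot>\<^sub>m \<rho> + \<sigma>) = c \<cdot>\<^sub>m \<Psi> \<rho> + \<Psi> \<sigma>)"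

text \<open>the linear map M_n -> M_m with prescribed images E x x' of the matrix units
  (undefined outside M_n, so that equality of such maps is equality on M_n)\<close>
definition from_units :: "nat \<Rightarrow> nat \<Rightarrow> (nat \<Rightarrow> nat \<Rightarrow> complex mat) \<Rightarrow> lmap" where
  "from_units n m E = (\<lambda>\<rho>. if \<rho> \<in> carrier_mat n n
      then mat m m (\<lambda>(i,j). \<Sum>x<n. \<Sum>x'<n. \<rho> $$ (x,x') * E x x' $$ (i,j))
      else undefined)"

definition lsum :: "nat \<Rightarrow> nat \<Rightarrow> nat set \<Rightarrow> (nat \<Rightarrow> lmap) \<Rightarrow> lmap" where
  "lsum n m I \<Psi> = (\<lambda>\<rho>. if \<rho> \<in> carrier_mat n n
      then mat m m (\<lambda>(i,j). \<Sum>k\<in>I. \<Psi> k \<rho> $$ (i,j)) else undefined)"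

text \<open>(id_{M_k} tensor Psi)(P), P in M_k tensor M_n, index (i,x) |-> i*n+x\<close>
definition ampl :: "nat \<Rightarrow> nat \<Rightarrow> nat \<Rightarrow> lmap \<Rightarrow> complex mat \<Rightarrow> complex mat" where
  "ampl k n m \<Psi> P = mat (k*m) (k*m) (\<lambda>(r,s).
      \<Psi> (mat n n (\<lambda>(a,b). P $$ ((r div m)*n + a, (s div m)*n + b))) $$ (r mod m, s mod m))"

definition cp :: "nat \<Rightarrow> nat \<Rightarrow> lmap \<Rightarrow> bool" where
  "cp n m \<Psi> \<longleftrightarrow> is_lmap n m \<Psi> \<and>
     (\<forall>k. \<forall>P. psd (k*n) P \<longrightarrow> psd (k*m) (ampl k n m \<Psi> P))"

definition tp :: "nat \<Rightarrow> lmap \<Rightarrow> bool" where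
  "tp n \<Psi> \<longleftrightarrow> (\<forall>\<rho> \<in> carrier_mat n n. mtrace (\<Psi> \<rho>) = mtrace \<rho>)"

definition qchannel :: "nat \<Rightarrow> nat \<Rightarrow> lmap \<Rightarrow> bool" where
  "qchannel n m \<Phi> \<longleftrightarrow> cp n m \<Phi> \<and> tp n \<Phi>"

definition ltensor :: "nat \<Rightarrow> nat \<Rightarrow> nat \<Rightarrow> nat \<Rightarrow> lmap \<Rightarrow> lmap \<Rightarrow> lmap" where
  "ltensor nX nY nA nB \<Psi> \<Phi> = from_units (nX*nY) (nA*nB) (\<lambda>p p'.
      kron nA nB (\<Psi> (munit nX (p div nY) (p' div nY))) (\<Phi> (munit nY (p mod nY) (p' mod nY))))"

definition Q_lowc :: "nat \<Rightarrow> nat \<Rightarrow> nat \<Rightarrow> nat \<Rightarrow> lmap set" where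
  "Q_lowc nX nY nA nB = {lsum (nX*nY) (nA*nB) {..<N} (\<lambda>i. ltensor nX nY nA nB (\<Psi> i) (\<Phi> i)) | N \<Psi> \<Phi>.
      (\<forall>i<N. cp nX nA (\<Psi> i)) \<and> tp nX (lsum nX nA {..<N} \<Psi>) \<and> (\<forall>i<N. qchannel nY nB (\<Phi> i))}"

text \<open>A block operator isometry over (Z,C) with H = C^h, L = C^l is a triple (h,l,W)
  where W : H^Z -> L^C is a (C*l) x (Z*h) matrix; row index c*l+k, column index z*h+j;
  the block W_{c,z} in B(H,L) is the l x h submatrix at rows c*l.., columns z*h..\<close>
type_synonym boi = "nat \<times> nat \<times> complex mat"

fun is_boi :: "nat \<Rightarrow> nat \<Rightarrow> boi \<Rightarrow> bool" where
  "is_boi nZ nC (h, l, W) \<longleftrightarrow> W \<in> carrier_mat (nC*l) (nZ*h) \<and> adj W * W = 1\<^sub>m (nZ*h)"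

fun blk :: "boi \<Rightarrow> nat \<Rightarrow> nat \<Rightarrow> complex mat" where
  "blk (h, l, W) c z = mat l h (\<lambda>(k,j). W $$ (c*l + k, z*h + j))"

text \<open>phi_W(S) = sum_{z,c} S_{z,c} W_{c,z}, for S : C^C -> C^Z (an nZ x nC matrix)\<close>
fun phi :: "nat \<Rightarrow> nat \<Rightarrow> boi \<Rightarrow> complex mat \<Rightarrow> complex mat" where
  "phi nZ nC (h, l, W) S = mat l h (\<lambda>(k,j). \<Sum>z<nZ. \<Sum>c<nC. S $$ (z,c) * blk (h,l,W) c z $$ (k,j))"

text \<open>entrywise direct sum: (W1 (+) W2)_{c,z} = W1_{c,z} (+) W2_{c,z} : H1(+)H2 -> L1(+)L2\<close>
fun bdsum :: "nat \<Rightarrow> nat \<Rightarrow> boi \<Rightarrow> boi \<Rightarrow> boi" where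
  "bdsum nZ nC (h1, l1, W1) (h2, l2, W2) = (h1+h2, l1+l2,
     mat (nC*(l1+l2)) (nZ*(h1+h2)) (\<lambda>(r,s).
       let c = r div (l1+l2); k = r mod (l1+l2); z = s div (h1+h2); j = s mod (h1+h2) in
       if k < l1 \<and> j < h1 then blk (h1,l1,W1) c z $$ (k,j)
       else if l1 \<le> k \<and> h1 \<le> j then blk (h2,l2,W2) c z $$ (k-l1, j-h1)
       else 0))"

definition is_resource :: "nat \<Rightarrow> nat \<Rightarrow> boi set \<Rightarrow> bool" where
  "is_resource nZ nC R \<longleftrightarrow>
     (\<forall>W\<in>R. is_boi nZ nC W) \<and>
     (\<forall>W1\<in>R. \<forall>W2\<in>R. bdsum nZ nC W1 W2 \<in> R) \<and>
     (\<forall>S \<in> carrier_mat nZ nC. S \<noteq> 0\<^sub>m nZ nC \<longrightarrow>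
        (\<exists>W\<in>R. phi nZ nC W S \<noteq> 0\<^sub>m (fst (snd W)) (fst W)))"

text \<open>Gamma_{W,sigma}(eps_{z,z'}) = sum_{c,c'} sigma(W_{c,z}^* W_{c',z'}) eps_{c,c'},
  sigma(T) = trace(D T), extended linearly\<close>
fun Gamma :: "nat \<Rightarrow> nat \<Rightarrow> boi \<Rightarrow> complex mat \<Rightarrow> lmap" where
  "Gamma nZ nC (h, l, W) D = from_units nZ nC (\<lambda>z z'.
      mat nC nC (\<lambda>(c,c'). mtrace (D * (adj (blk (h,l,W) c z) * blk (h,l,W) c' z'))))"

definition QC :: "nat \<Rightarrow> nat \<Rightarrow> boi set \<Rightarrow> lmap set" where
  "QC nZ nC R = {Gamma nZ nC W D | W D. W \<in> R \<and> density (fst W) D}"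

text \<open>Generator: sizes s i = |S_i|, t i = |T_i|, U i : C^X -> C^A (x) C^{S_i}
  ((nA * s i) x nX matrix), V i : C^Y -> C^B (x) C^{T_i}.  K = (+)_i C^{S_i}(x)C^{T_i},
  summand i starting at offset sum_{j<i} s j * t j, with (s,t) |-> s * t i + t.
  The result has H = C (h = 1) and L = K.\<close>
definition lowc_gen :: "nat \<Rightarrow> nat \<Rightarrow> nat \<Rightarrow> nat \<Rightarrow> nat \<Rightarrow> (nat \<Rightarrow> nat) \<Rightarrow> (nat \<Rightarrow> nat)
    \<Rightarrow> (nat \<Rightarrow> complex mat) \<Rightarrow> (nat \<Rightarrow> complex mat) \<Rightarrow> boi" where
  "lowc_gen nX nY nA nB n s t U V =
    (let kd = (\<Sum>i<n. s i * t i); off = (\<lambda>i. \<Sum>j<i. s j * t j) in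
     (1, kd, mat ((nA*nB)*kd) ((nX*nY)*1) (\<lambda>(r,col).
        let ab = r div kd; k = r mod kd; a = ab div nB; b = ab mod nB;
            x = col div nY; y = col mod nY in
        \<Sum>i<n. \<Sum>p<s i * t i. if k = off i + p
           then U i $$ (a * s i + p div t i, x) * V i $$ (b * t i + p mod t i, y) else 0)))"

inductive_set R_lowc :: "nat \<Rightarrow> nat \<Rightarrow> nat \<Rightarrow> nat \<Rightarrow> boi set"
  for nX nY nA nB :: nat where
  gen: "\<lbrakk> \<forall>i<n. U i \<in> carrier_mat (nA * s i) nX;
          \<forall>i<n. V i \<in> carrier_mat (nB * t i) nY;
          \<forall>i<n. adj (V i) * V i = 1\<^sub>m nY;
          mat nX nX (\<lambda>(x,x'). \<Sum>i<n. (adj (U i) * U i) $$ (x,x')) = 1\<^sub>m nX \<rbrakk>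
        \<Longrightarrow> lowc_gen nX nY nA nB n s t U V \<in> R_lowc nX nY nA nB"
| dsum: "\<lbrakk> W1 \<in> R_lowc nX nY nA nB; W2 \<in> R_lowc nX nY nA nB \<rbrakk>
        \<Longrightarrow> bdsum (nX*nY) (nA*nB) W1 W2 \<in> R_lowc nX nY nA nB"

end

theory Submission
  imports Defs
begin

(* Each generator W of R_lowc, with a state d on C^1, realises Gamma = sum_i (d Psi_i) (x) Phi_i,
   where Psi_i and Phi_i are the Kraus maps of (the entrywise conjugates of) U_i and V_i,
   i.e. partial traces over C^{S_i} and C^{T_i}: the isometry conditions on the U_i and V_i say
   precisely that sum_i Psi_i is trace preserving and that every Phi_i is a channel.  For a direct sum
   W1 (+) W2 and a state D, Gamma splits as the sum of the maps of W1 and W2 evaluated at the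
   two diagonal blocks of D, so induction over R_lowc gives QC(R_lowc) <= Q_lowc.
   Conversely, a Gram factorisation of its Choi matrix gives every completely positive map a
   Kraus representation, and the Kraus operators of the Psi_i and Phi_i of a channel in Q_lowc
   assemble into a single generator that realises it with the trivial state.  Separation: for
   U = e_a (x) I and V = e_b (x) I the map phi_W picks out the column (a,b) of S. *)

section \<open>Index arithmetic\<close>

lemma sum_lessThan_add:
  "(\<Sum>r<(a::nat) + b. f r) = (\<Sum>r<a. f r) + (\<Sum>j<b. f (a + j) :: 'a::comm_monoid_add)"
  by (induction b) (simp_all add: add.assoc)

lemma sum_lessThan_mult:
  "(\<Sum>r<(k::nat) * m. f r) = (\<Sum>i<k. \<Sum>j<m. f (i * m + j) :: 'a::comm_monoid_add)"
proof (induction k)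
  case (Suc k)
  have "(\<Sum>r<Suc k * m. f r) = (\<Sum>r<k * m. f r) + (\<Sum>j<m. f (k * m + j))"
    using sum_lessThan_add[where a="k * m" and b=m and f=f] by (simp add: add.commute)
  then show ?case using Suc by simp
qed simp

lemma mult_add_less:
  fixes c k :: nat
  assumes "c < C" "k < K"
  shows "c * K + k < C * K"
proof -
  have "c * K + k < Suc c * K" using assms(2) by simp
  also have "\<dots> \<le> C * K" using assms(1) by (intro mult_le_mono1) simp
  finally show ?thesis .
qed

lemma mult_add_div [simp]: "x < n \<Longrightarrow> (j * n + x) div n = (j::nat)"
  and mult_add_mod [simp]: "x < n \<Longrightarrow> (j * n + x) mod n = (x::nat)"
  by auto

lemma mult_add_eq_iff:
  fixes j j' :: nat
  assumes "j < h" "j' < h"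
  shows "z * h + j = z' * h + j' \<longleftrightarrow> z = z' \<and> j = j'"
  by (metis assms mult_add_div mult_add_mod)

lemma div_mod_eq_iff: "(p::nat) = q \<longleftrightarrow> p div n = q div n \<and> p mod n = q mod n"
  by (metis div_mult_mod_eq)

lemma div_less_of_less_mult: "p < a * (b::nat) \<Longrightarrow> p div b < a"
  by (simp add: less_mult_imp_div_less)

lemma mod_less_of_less_mult: "p < a * (b::nat) \<Longrightarrow> p mod b < b"
  by (cases b) auto

lemma sum_lessThan_mult_select:
  fixes c k n :: nat
  assumes "c < k"
  shows "(\<Sum>u<k * n. if u div n = c then f u else 0) = (\<Sum>x<n. f (c * n + x) :: 'a::comm_monoid_add)"
proof -
  have "(\<Sum>u<k * n. if u div n = c then f u else 0) = (\<Sum>j<k. \<Sum>x<n. if j = c then f (j * n + x) else 0)"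
    by (subst sum_lessThan_mult) (intro sum.cong refl, auto)
  also have "\<dots> = (\<Sum>j<k. if j = c then \<Sum>x<n. f (j * n + x) else 0)"
    by (intro sum.cong refl) auto
  finally show ?thesis using assms by simp
qed

lemma offset_less:
  fixes m :: "nat \<Rightarrow> nat"
  assumes "i < n" "p < m i"
  shows "(\<Sum>l<i. m l) + p < (\<Sum>l<n. m l)"
proof -
  have "(\<Sum>l<i. m l) + p < (\<Sum>l<Suc i. m l)" using assms(2) by simp
  also have "\<dots> \<le> (\<Sum>l<n. m l)" using assms(1) by (intro sum_mono2) auto
  finally show ?thesis .
qed

lemma offset_eq_iff:
  fixes m :: "nat \<Rightarrow> nat"
  assumes "p < m i" "q < m j"
  shows "(\<Sum>l<i. m l) + p = (\<Sum>l<j. m l) + q \<longleftrightarrow> i = j \<and> p = q"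
proof -
  have "(\<Sum>l<i. m l) + p \<noteq> (\<Sum>l<j. m l) + q" if "i < j" "p < m i" for i j p q
    using offset_less[of i j p m] that by simp
  then show ?thesis using assms by (metis linorder_neqE_nat add_left_cancel)
qed

lemma sum_lessThan_sum:
  "(\<Sum>k<(\<Sum>i<(n::nat). m i :: nat). g k) = (\<Sum>i<n. \<Sum>p<m i. g ((\<Sum>j<i. m j) + p) :: 'a::comm_monoid_add)"
  by (induction n) (simp_all add: sum_lessThan_add)

lemma sum_offset_delta:
  fixes m :: "nat \<Rightarrow> nat"
  assumes "j < n" "q < m j"
  shows "(\<Sum>i<n. \<Sum>p<m i. if (\<Sum>l<j. m l) + q = (\<Sum>l<i. m l) + p then f i p else 0) = (f j q :: 'a::comm_monoid_add)"
proof -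
  have "(\<Sum>i<n. \<Sum>p<m i. if (\<Sum>l<j. m l) + q = (\<Sum>l<i. m l) + p then f i p else 0)
      = (\<Sum>i<n. if i = j then f j q else 0)"
    using assms by (intro sum.cong refl) (auto simp: offset_eq_iff if_distrib cong: if_cong)
  then show ?thesis using assms by simp
qed

lemma sum_delta_pair:
  fixes x x' n n' :: nat
  assumes "x < n" "x' < n'"
  shows "(\<Sum>i<n. \<Sum>j<n'. if i = x \<and> j = x' then f i j else 0) = (f x x' :: 'a::comm_monoid_add)"
proof -
  have "(\<Sum>i<n. \<Sum>j<n'. if i = x \<and> j = x' then f i j else 0)
      = (\<Sum>i<n. if i = x then \<Sum>j<n'. if j = x' then f i j else 0 else 0)"
    by (intro sum.cong) auto
  then show ?thesis using assms by simp
qed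

section \<open>Positive semidefinite kernels\<close>

text \<open>The order on \<open>complex\<close> is the partial order of \<open>HOL-Library.Complex_Order\<close>,
  imported through \<open>Jordan_Normal_Form\<close>.\<close>
lemma complex_nonneg_iff: "0 \<le> (z::complex) \<longleftrightarrow> Im z = 0 \<and> 0 \<le> Re z"
  by (auto simp: less_eq_complex_def)

lemma cnj_mult_self_nonneg: "0 \<le> cnj z * z"
  by (simp add: complex_nonneg_iff)

definition qform :: "nat \<Rightarrow> (nat \<Rightarrow> nat \<Rightarrow> complex) \<Rightarrow> (nat \<Rightarrow> complex) \<Rightarrow> complex" where
  "qform n C v = (\<Sum>i<n. \<Sum>j<n. cnj (v i) * C i j * v j)"

definition psd_kernel :: "nat \<Rightarrow> (nat \<Rightarrow> nat \<Rightarrow> complex) \<Rightarrow> bool" where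
  "psd_kernel n C \<longleftrightarrow> (\<forall>v. 0 \<le> qform n C v)"

lemma qform_cong:
  assumes "\<And>i j. i < n \<Longrightarrow> j < n \<Longrightarrow> C i j = C' i j" "\<And>i. i < n \<Longrightarrow> u i = v i"
  shows "qform n C u = qform n C' v"
  unfolding qform_def using assms by (intro sum.cong) auto

lemma qform_support:
  assumes "S \<subseteq> {..<n}" "\<And>k. k \<notin> S \<Longrightarrow> v k = 0"
  shows "qform n C v = (\<Sum>i\<in>S. \<Sum>j\<in>S. cnj (v i) * C i j * v j)"
proof -
  have fin: "finite S" using assms(1) finite_subset by blast
  have "qform n C v = (\<Sum>i<n. \<Sum>j\<in>S. cnj (v i) * C i j * v j)"
    unfolding qform_def
    by (intro sum.cong refl sum.mono_neutral_right) (use assms fin in auto)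
  also have "\<dots> = (\<Sum>i\<in>S. \<Sum>j\<in>S. cnj (v i) * C i j * v j)"
    by (intro sum.mono_neutral_right) (use assms fin in auto)
  finally show ?thesis .
qed

lemma qform_Suc:
  "qform (Suc n) C u = qform n C u + cnj (u n) * (\<Sum>j<n. C n j * u j)
     + (\<Sum>i<n. cnj (u i) * C i n) * u n + cnj (u n) * C n n * u n"
  unfolding qform_def by (simp add: sum.distrib sum_distrib_left sum_distrib_right algebra_simps)

lemma qform_minus_rank_one:
  "qform n (\<lambda>i j. C i j - w i * cnj (w j)) u
     = qform n C u - cnj (\<Sum>j<n. cnj (w j) * u j) * (\<Sum>j<n. cnj (w j) * u j)"
proof -
  have "qform n (\<lambda>i j. C i j - w i * cnj (w j)) u
      = qform n C u - (\<Sum>i<n. \<Sum>j<n. (cnj (u i) * w i) * (cnj (w j) * u j))"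
    unfolding qform_def by (simp add: sum_subtractf algebra_simps)
  also have "(\<Sum>i<n. \<Sum>j<n. (cnj (u i) * w i) * (cnj (w j) * u j))
      = (\<Sum>i<n. cnj (u i) * w i) * (\<Sum>j<n. cnj (w j) * u j)"
    by (simp add: sum_product)
  also have "(\<Sum>i<n. cnj (u i) * w i) = cnj (\<Sum>j<n. cnj (w j) * u j)"
    by (simp add: mult.commute)
  finally show ?thesis .
qed

lemma qform_scaled_sum:
  "qform N (\<lambda>r t. d * (\<Sum>s\<in>S. B s r t)) v = d * (\<Sum>s\<in>S. qform N (B s) v)"
  unfolding qform_def by (simp add: sum_distrib_left sum_distrib_right algebra_simps sum.swap[of _ S])

lemma qform_congruence:
  "qform N (\<lambda>r t. \<Sum>u<M. \<Sum>u'<M. X r u * P u u' * cnj (X t u')) v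
     = qform M P (\<lambda>u. \<Sum>t<N. cnj (X t u) * v t)"
proof -
  have "qform N (\<lambda>r t. \<Sum>u<M. \<Sum>u'<M. X r u * P u u' * cnj (X t u')) v =
        (\<Sum>r<N. \<Sum>t<N. \<Sum>u<M. \<Sum>u'<M. cnj (v r) * X r u * P u u' * cnj (X t u') * v t)"
    unfolding qform_def by (simp add: sum_distrib_left sum_distrib_right mult.assoc)
  also have "\<dots> = (\<Sum>u<M. \<Sum>u'<M. \<Sum>r<N. \<Sum>t<N. cnj (v r) * X r u * P u u' * cnj (X t u') * v t)"
    by (simp only: sum.swap[where A="{..<N}" and B="{..<M}"])
  also have "\<dots> = qform M P (\<lambda>u. \<Sum>t<N. cnj (X t u) * v t)"
    unfolding qform_def by (simp add: sum_distrib_left sum_distrib_right mult.assoc mult.commute mult.left_commute)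
  finally show ?thesis .
qed

lemma psd_kernel_diag_nonneg:
  assumes "psd_kernel n C" "i < n"
  shows "0 \<le> C i i"
proof -
  have "qform n C (\<lambda>k. if k = i then 1 else 0) = C i i"
    using assms by (subst qform_support[where S="{i}"]) auto
  then show ?thesis using assms unfolding psd_kernel_def by metis
qed

lemma psd_kernel_hermitian:
  assumes "psd_kernel n C" "i < n" "j < n"
  shows "C j i = cnj (C i j)"
proof (cases "i = j")
  case True
  then show ?thesis using psd_kernel_diag_nonneg[OF assms(1,2)] by (simp add: complex_nonneg_iff complex_eq_iff)
next
  case False
  have diag: "Im (C i i) = 0" "Im (C j j) = 0"
    using psd_kernel_diag_nonneg assms by (auto simp: complex_nonneg_iff)
  have "qform n C (\<lambda>k. if k = i then 1 else if k = j then 1 else 0) = C i i + C i j + C j i + C j j"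
    using assms False by (subst qform_support[where S="{i,j}"]) auto
  then have "0 \<le> C i i + C i j + C j i + C j j"
    using assms(1) unfolding psd_kernel_def by metis
  then have "Im (C i j + C j i) = 0" using diag by (simp add: complex_nonneg_iff)
  moreover have "qform n C (\<lambda>k. if k = i then 1 else if k = j then \<i> else 0)
      = C i i + \<i> * C i j - \<i> * C j i + C j j"
    using assms False by (subst qform_support[where S="{i,j}"]) (auto simp: algebra_simps)
  then have "0 \<le> C i i + \<i> * C i j - \<i> * C j i + C j j"
    using assms(1) unfolding psd_kernel_def by metis
  then have "Re (C i j - C j i) = 0" using diag by (simp add: complex_nonneg_iff)
  ultimately show ?thesis by (simp add: complex_eq_iff)
qed

lemma psd_kernel_zero_diag_imp_zero:
  assumes "psd_kernel n C" "i < n" "j < n" "C j j = 0"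
  shows "C i j = 0"
proof (rule ccontr)
  assume nz: "C i j \<noteq> 0"
  then have "i \<noteq> j" using assms by auto
  \<comment> \<open>test vector e_i + t e_j with t chosen to make the form negative\<close>
  define t where "t = - complex_of_real (Re (C i i) + 1) / C i j"
  have ct: "C i j * t = - complex_of_real (Re (C i i) + 1)" using nz by (simp add: t_def)
  have "qform n C (\<lambda>k. if k = i then 1 else if k = j then t else 0) = C i i + C i j * t + cnj t * C j i"
    using assms \<open>i \<noteq> j\<close> by (subst qform_support[where S="{i,j}"]) (auto simp: algebra_simps)
  also have "\<dots> = C i i + C i j * t + cnj (C i j * t)"
    using psd_kernel_hermitian[OF assms(1-3)] by simp
  also have "\<dots> = C i i - 2 * complex_of_real (Re (C i i) + 1)" by (simp add: ct)
  finally have "0 \<le> C i i - 2 * complex_of_real (Re (C i i) + 1)"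
    using assms(1) unfolding psd_kernel_def by metis
  moreover have "0 \<le> Re (C i i)" using psd_kernel_diag_nonneg[OF assms(1,2)] by (simp add: complex_nonneg_iff)
  ultimately show False by (simp add: complex_nonneg_iff)
qed

lemma psd_kernel_Suc_imp:
  assumes "psd_kernel (Suc n) C"
  shows "psd_kernel n C"
  unfolding psd_kernel_def
proof
  fix v
  have "qform n C v = qform n C (\<lambda>k. if k < n then v k else 0)" by (rule qform_cong) auto
  also have "\<dots> = qform (Suc n) C (\<lambda>k. if k < n then v k else 0)" by (simp add: qform_Suc)
  finally show "0 \<le> qform n C v" using assms unfolding psd_kernel_def by metis
qed

lemma psd_kernel_deflate:
  assumes psd: "psd_kernel (Suc n) C" and wn: "w n \<noteq> 0"
    and col: "\<And>i. i < Suc n \<Longrightarrow> C i n = w i * cnj (w n) \<and> C n i = w n * cnj (w i)"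
  shows "psd_kernel n (\<lambda>i j. C i j - w i * cnj (w j))"
  unfolding psd_kernel_def
proof
  fix v
  define C' where "C' i j = C i j - w i * cnj (w j)" for i j
  \<comment> \<open>extend v by a last coordinate that makes it orthogonal to w\<close>
  define u where "u k = (if k < n then v k else - (\<Sum>j<n. cnj (w j) * v j) / cnj (w n))" for k
  have orth: "(\<Sum>j<Suc n. cnj (w j) * u j) = 0"
    using wn by (simp add: u_def)
  have "C' i n = 0" "C' n i = 0" if "i < Suc n" for i
    using col[OF that] by (simp_all add: C'_def)
  then have "qform n C' v = qform (Suc n) C' u"
    by (simp add: qform_Suc u_def cong: qform_cong)
  also have "\<dots> = qform (Suc n) C u"
    unfolding C'_def qform_minus_rank_one orth by simp
  finally show "0 \<le> qform n (\<lambda>i j. C i j - w i * cnj (w j)) v"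
    using psd unfolding psd_kernel_def C'_def by metis
qed

lemma psd_kernel_peel:
  assumes psd: "psd_kernel (Suc n) C"
  shows "\<exists>w. psd_kernel n (\<lambda>i j. C i j - w i * cnj (w j)) \<and>
           (\<forall>i<Suc n. C i n = w i * cnj (w n) \<and> C n i = w n * cnj (w i))"
proof (cases "C n n = 0")
  case True
  have "C i n = 0 \<and> C n i = 0" if "i < Suc n" for i
    using psd_kernel_zero_diag_imp_zero[OF psd that] psd_kernel_hermitian[OF psd that] True by simp
  then show ?thesis using psd_kernel_Suc_imp[OF psd] by (intro exI[of _ "\<lambda>_. 0"]) simp
next
  case False
  have "0 \<le> C n n" using psd_kernel_diag_nonneg[OF psd] by simp
  define c where "c = Re (C n n)"
  have c: "C n n = complex_of_real c" "c > 0"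
    using \<open>0 \<le> C n n\<close> False by (auto simp: c_def complex_nonneg_iff complex_eq_iff)
  define sc where "sc = complex_of_real (sqrt c)"
  have sc: "sc \<noteq> 0" "cnj sc = sc" "sc * sc = C n n"
    using c by (simp_all add: sc_def flip: of_real_mult)
  define w where "w i = C i n / sc" for i
  have wn: "w n = sc" using sc by (simp add: w_def field_simps)
  have col: "C i n = w i * cnj (w n) \<and> C n i = w n * cnj (w i)" if "i < Suc n" for i
    using sc psd_kernel_hermitian[OF psd that, of n] c(1) False by (simp add: w_def wn)
  then show ?thesis using psd_kernel_deflate[OF psd, of w] sc(1) wn by auto
qed

lemma psd_kernel_gram:
  "psd_kernel n C \<Longrightarrow> \<exists>r M. \<forall>i<n. \<forall>j<n. C i j = (\<Sum>s<(r::nat). M i s * cnj (M j s))"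
proof (induction n arbitrary: C)
  case (Suc n)
  obtain w where psd': "psd_kernel n (\<lambda>i j. C i j - w i * cnj (w j))"
    and col: "\<forall>i<Suc n. C i n = w i * cnj (w n) \<and> C n i = w n * cnj (w i)"
    using psd_kernel_peel[OF Suc.prems] by blast
  obtain r :: nat and M where M: "\<forall>i<n. \<forall>j<n. C i j - w i * cnj (w j) = (\<Sum>s<r. M i s * cnj (M j s))"
    using Suc.IH[OF psd'] by blast
  define M' where "M' i s = (if s < r then if i < n then M i s else 0 else w i)" for i s
  have "C i j = (\<Sum>s<Suc r. M' i s * cnj (M' j s))" if ij: "i < Suc n" "j < Suc n" for i j
  proof -
    have split: "(\<Sum>s<Suc r. M' i s * cnj (M' j s))
        = (\<Sum>s<r. M' i s * cnj (M' j s)) + w i * cnj (w j)"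
      by (simp add: M'_def)
    show ?thesis
    proof (cases "i < n \<and> j < n")
      case True
      then have "C i j - w i * cnj (w j) = (\<Sum>s<r. M' i s * cnj (M' j s))"
        using M by (simp add: M'_def)
      then show ?thesis unfolding split by (metis diff_add_cancel)
    next
      case False
      then have "i = n \<or> j = n" using ij by auto
      then have "C i j = w i * cnj (w j)" using col ij by auto
      moreover have "(\<Sum>s<r. M' i s * cnj (M' j s)) = 0"
        using False by (auto simp: M'_def)
      ultimately show ?thesis unfolding split by simp
    qed
  qed
  then show ?case by blast
qed simp

lemma psd_iff_psd_kernel: "psd n P \<longleftrightarrow> P \<in> carrier_mat n n \<and> psd_kernel n (\<lambda>i j. P $$ (i,j))"
proof -
  have form: "(\<Sum>i<n. cnj (v $ i) * (P *\<^sub>v v) $ i) = qform n (\<lambda>i j. P $$ (i,j)) (\<lambda>i. v $ i)"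
    if "P \<in> carrier_mat n n" "v \<in> carrier_vec n" for v
    unfolding qform_def using that
    by (intro sum.cong refl) (auto simp: scalar_prod_def sum_distrib_left atLeast0LessThan algebra_simps)
  show ?thesis
  proof
    assume "psd n P"
    then have P: "P \<in> carrier_mat n n"
      and nonneg: "\<forall>v\<in>carrier_vec n. 0 \<le> (\<Sum>i<n. cnj (v $ i) * (P *\<^sub>v v) $ i)"
      unfolding psd_def complex_nonneg_iff Let_def by auto
    have "0 \<le> qform n (\<lambda>i j. P $$ (i,j)) f" for f
    proof -
      have eq: "qform n (\<lambda>i j. P $$ (i,j)) f = qform n (\<lambda>i j. P $$ (i,j)) (\<lambda>i. vec n f $ i)"
        by (rule qform_cong) auto
      have "0 \<le> qform n (\<lambda>i j. P $$ (i,j)) (\<lambda>i. vec n f $ i)"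
        using nonneg[rule_format, OF vec_carrier[of n f]] form[OF P vec_carrier[of n f]] by (simp only:)
      then show ?thesis by (simp only: eq)
    qed
    then show "P \<in> carrier_mat n n \<and> psd_kernel n (\<lambda>i j. P $$ (i,j))"
      using P unfolding psd_kernel_def by auto
  next
    assume "P \<in> carrier_mat n n \<and> psd_kernel n (\<lambda>i j. P $$ (i,j))"
    then show "psd n P"
      unfolding psd_def Let_def psd_kernel_def using form complex_nonneg_iff by metis
  qed
qed

section \<open>Matrix units and linear maps on matrices\<close>

lemma adj_dims [simp]: "dim_row (adj A) = dim_col A" "dim_col (adj A) = dim_row A"
  by (simp_all add: adj_def)

lemma adj_mult_index:
  assumes "dim_row A = R" "dim_row B = R" "i < dim_col A" "j < dim_col B"
  shows "(adj A * B) $$ (i,j) = (\<Sum>r<R. cnj (A $$ (r,i)) * B $$ (r,j))"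
  using assms by (simp add: adj_def scalar_prod_def atLeast0LessThan)

lemma adj_mult_index_blocks:
  assumes "U \<in> carrier_mat (m * s) n" "x < n" "x' < n"
  shows "(adj U * U) $$ (x,x') = (\<Sum>a<m. \<Sum>\<sigma><s. cnj (U $$ (a*s+\<sigma>, x)) * U $$ (a*s+\<sigma>, x'))"
proof -
  have "(adj U * U) $$ (x,x') = (\<Sum>r<m*s. cnj (U $$ (r,x)) * U $$ (r,x'))"
    using assms by (intro adj_mult_index) auto
  then show ?thesis by (simp add: sum_lessThan_mult)
qed

lemma mtrace_mult:
  assumes "A \<in> carrier_mat n n" "X \<in> carrier_mat n n"
  shows "mtrace (A * X) = (\<Sum>i<n. \<Sum>j<n. A $$ (i,j) * X $$ (j,i))"
  using assms by (simp add: mtrace_def scalar_prod_def atLeast0LessThan)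

lemma mtrace_eq_pairing_one_mat:
  assumes "\<rho> \<in> carrier_mat n n"
  shows "(\<Sum>x<n. \<Sum>x'<n. \<rho> $$ (x,x') * 1\<^sub>m n $$ (x,x')) = mtrace \<rho>"
  using assms unfolding mtrace_def by (simp add: sum.delta' if_distrib cong: if_cong)

lemma munit_carrier [simp]: "munit n p p' \<in> carrier_mat n n"
  by (simp add: munit_def)

lemma munit_index [simp]:
  "x < n \<Longrightarrow> x' < n \<Longrightarrow> munit n p p' $$ (x,x') = (if x = p \<and> x' = p' then 1 else 0)"
  by (simp add: munit_def)

lemma mtrace_munit: "y < n \<Longrightarrow> y' < n \<Longrightarrow> mtrace (munit n y y') = (if y = y' then 1 else 0)"
  by (cases "y = y'") (auto simp: mtrace_def munit_def intro!: sum.neutral)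

lemma from_units_eqI:
  assumes "\<And>p p' i j. p < n \<Longrightarrow> p' < n \<Longrightarrow> i < m \<Longrightarrow> j < m \<Longrightarrow> E p p' $$ (i,j) = E' p p' $$ (i,j)"
  shows "from_units n m E = from_units n m E'"
  unfolding from_units_def by (rule ext) (auto intro!: eq_matI sum.cong simp: assms)

lemma from_units_munit:
  assumes "p < n" "p' < n" "i < m" "j < m"
  shows "from_units n m E (munit n p p') $$ (i,j) = E p p' $$ (i,j)"
  using assms
  by (simp add: from_units_def if_distrib[of "\<lambda>c. c * _"] sum_delta_pair cong: if_cong)

lemma lsum_from_units:
  "lsum n m I (\<lambda>k. from_units n m (E k))
     = from_units n m (\<lambda>p p'. mat m m (\<lambda>(i,j). \<Sum>k\<in>I. E k p p' $$ (i,j)))"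
  unfolding lsum_def from_units_def
  by (rule ext) (auto intro!: eq_matI simp: sum_distrib_left sum.swap[of _ I])

lemma mtrace_lsum:
  "\<rho> \<in> carrier_mat n n \<Longrightarrow> mtrace (lsum n m I \<Psi> \<rho>) = (\<Sum>a<m. \<Sum>k\<in>I. \<Psi> k \<rho> $$ (a,a))"
  by (simp add: lsum_def mtrace_def)

lemma lsum_ltensor:
  "lsum (nX*nY) (nA*nB) {..<N} (\<lambda>i. ltensor nX nY nA nB (\<Psi> i) (\<Phi> i)) =
   from_units (nX*nY) (nA*nB) (\<lambda>p p'. mat (nA*nB) (nA*nB) (\<lambda>(c,c'). \<Sum>i<N.
      \<Psi> i (munit nX (p div nY) (p' div nY)) $$ (c div nB, c' div nB) *
      \<Phi> i (munit nY (p mod nY) (p' mod nY)) $$ (c mod nB, c' mod nB)))"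
  unfolding ltensor_def lsum_from_units by (rule from_units_eqI) (simp add: kron_def)

lemma lsum_ltensor_munit:
  assumes "p < nX*nY" "p' < nX*nY" "c < nA*nB" "c' < nA*nB"
  shows "lsum (nX*nY) (nA*nB) {..<N} (\<lambda>i. ltensor nX nY nA nB (\<Psi> i) (\<Phi> i)) (munit (nX*nY) p p') $$ (c,c') =
    (\<Sum>i<N. \<Psi> i (munit nX (p div nY) (p' div nY)) $$ (c div nB, c' div nB) *
      \<Phi> i (munit nY (p mod nY) (p' mod nY)) $$ (c mod nB, c' mod nB))"
  using assms by (simp add: lsum_ltensor from_units_munit)

lemma lsum_ltensor_cong:
  assumes "\<And>i x x'. i < N \<Longrightarrow> x < nX \<Longrightarrow> x' < nX \<Longrightarrow> \<Psi> i (munit nX x x') = \<Psi>' i (munit nX x x')"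
    and "\<And>i y y'. i < N \<Longrightarrow> y < nY \<Longrightarrow> y' < nY \<Longrightarrow> \<Phi> i (munit nY y y') = \<Phi>' i (munit nY y y')"
  shows "lsum (nX*nY) (nA*nB) {..<N} (\<lambda>i. ltensor nX nY nA nB (\<Psi> i) (\<Phi> i))
       = lsum (nX*nY) (nA*nB) {..<N} (\<lambda>i. ltensor nX nY nA nB (\<Psi>' i) (\<Phi>' i))"
  unfolding lsum_ltensor
proof (rule from_units_eqI)
  fix p p' c c' assume "p < nX*nY" "p' < nX*nY"
  then have "p div nY < nX" "p' div nY < nX" "p mod nY < nY" "p' mod nY < nY"
    by (simp_all add: div_less_of_less_mult mod_less_of_less_mult)
  then show "mat (nA*nB) (nA*nB) (\<lambda>(c,c'). \<Sum>i<N. \<Psi> i (munit nX (p div nY) (p' div nY)) $$ (c div nB, c' div nB) *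
        \<Phi> i (munit nY (p mod nY) (p' mod nY)) $$ (c mod nB, c' mod nB)) $$ (c,c')
      = mat (nA*nB) (nA*nB) (\<lambda>(c,c'). \<Sum>i<N. \<Psi>' i (munit nX (p div nY) (p' div nY)) $$ (c div nB, c' div nB) *
        \<Phi>' i (munit nY (p mod nY) (p' mod nY)) $$ (c mod nB, c' mod nB)) $$ (c,c')"
    using assms by (auto intro!: sum.cong)
qed

section \<open>Kraus maps\<close>

text \<open>\<open>kraus_map n m s U d\<close> is \<open>\<rho> \<mapsto> d \<cdot> tr\<^sub>s (conj U \<rho> (conj U)\<^sup>*)\<close> for
  \<open>U : \<complex>\<^sup>n \<rightarrow> \<complex>\<^sup>m \<otimes> \<complex>\<^sup>s\<close>; the entrywise conjugate matches \<open>Gamma\<close>,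
  which puts the adjoint block on the left.\<close>
definition kraus_map :: "nat \<Rightarrow> nat \<Rightarrow> nat \<Rightarrow> complex mat \<Rightarrow> complex \<Rightarrow> lmap" where
  "kraus_map n m s U d = (\<lambda>\<rho>. mat m m (\<lambda>(a,a'). d * (\<Sum>\<sigma><s. \<Sum>x<n. \<Sum>x'<n.
      \<rho> $$ (x,x') * cnj (U $$ (a*s+\<sigma>, x)) * U $$ (a'*s+\<sigma>, x'))))"

lemma kraus_map_carrier [simp]: "kraus_map n m s U d \<rho> \<in> carrier_mat m m"
  and kraus_map_dims [simp]:
    "dim_row (kraus_map n m s U d \<rho>) = m" "dim_col (kraus_map n m s U d \<rho>) = m"
  by (simp_all add: kraus_map_def)

lemma kraus_map_index:
  "a < m \<Longrightarrow> a' < m \<Longrightarrow> kraus_map n m s U d \<rho> $$ (a,a') = d * (\<Sum>\<sigma><s. \<Sum>x<n. \<Sum>x'<n.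
      \<rho> $$ (x,x') * cnj (U $$ (a*s+\<sigma>, x)) * U $$ (a'*s+\<sigma>, x'))"
  by (simp add: kraus_map_def)

lemma kraus_map_munit:
  assumes "x < n" "x' < n" "a < m" "a' < m"
  shows "kraus_map n m s U d (munit n x x') $$ (a,a')
       = d * (\<Sum>\<sigma><s. cnj (U $$ (a*s+\<sigma>, x)) * U $$ (a'*s+\<sigma>, x'))"
  using assms
  by (simp add: kraus_map_index if_distrib[of "\<lambda>c. c * _"] sum_delta_pair sum_distrib_left cong: if_cong)

lemma kraus_map_index_scale:
  "a < m \<Longrightarrow> a' < m \<Longrightarrow> kraus_map n m s U d \<rho> $$ (a,a') = d * kraus_map n m s U 1 \<rho> $$ (a,a')"
  by (simp add: kraus_map_index)

lemma is_lmap_kraus_map: "is_lmap n m (kraus_map n m s U d)"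
  unfolding is_lmap_def
proof (intro conjI ballI allI)
  fix \<rho> \<sigma> :: "complex mat" and c :: complex
  assume "\<rho> \<in> carrier_mat n n" "\<sigma> \<in> carrier_mat n n"
  then show "kraus_map n m s U d (c \<cdot>\<^sub>m \<rho> + \<sigma>) = c \<cdot>\<^sub>m kraus_map n m s U d \<rho> + kraus_map n m s U d \<sigma>"
    by (intro eq_matI) (simp_all add: kraus_map_index sum.distrib sum_distrib_left algebra_simps)
qed simp

lemma ampl_kraus_map_index:
  fixes U :: "complex mat" and n m s :: nat
  assumes "r < k*m" "t < k*m"
  defines "X \<equiv> \<lambda>\<sigma> r u. if u div n = r div m then cnj (U $$ ((r mod m)*s+\<sigma>, u mod n)) else 0"
  shows "ampl k n m (kraus_map n m s U d) P $$ (r,t)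
       = d * (\<Sum>\<sigma><s. \<Sum>u<k*n. \<Sum>u'<k*n. X \<sigma> r u * P $$ (u,u') * cnj (X \<sigma> t u'))"
proof -
  have m0: "m > 0" using assms(1) by (cases m) auto
  have rk: "r div m < k" "t div m < k" using assms by (auto simp: div_less_of_less_mult)
  have "(\<Sum>u<k*n. \<Sum>u'<k*n. X \<sigma> r u * P $$ (u,u') * cnj (X \<sigma> t u')) =
      (\<Sum>x<n. \<Sum>x'<n. P $$ ((r div m)*n+x, (t div m)*n+x') *
         cnj (U $$ ((r mod m)*s+\<sigma>, x)) * U $$ ((t mod m)*s+\<sigma>, x'))" for \<sigma>
  proof -
    have "(\<Sum>u<k*n. \<Sum>u'<k*n. X \<sigma> r u * P $$ (u,u') * cnj (X \<sigma> t u')) =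
       (\<Sum>u<k*n. if u div n = r div m then (\<Sum>u'<k*n. if u' div n = t div m then
          cnj (U $$ ((r mod m)*s+\<sigma>, u mod n)) * P $$ (u,u') * U $$ ((t mod m)*s+\<sigma>, u' mod n) else 0) else 0)"
      by (auto simp: X_def intro!: sum.cong)
    then show ?thesis using rk by (simp add: sum_lessThan_mult_select algebra_simps)
  qed
  then show ?thesis using assms m0 by (simp add: ampl_def kraus_map_index)
qed

lemma cp_kraus_map:
  assumes "0 \<le> d"
  shows "cp n m (kraus_map n m s U d)"
  unfolding cp_def
proof (intro conjI allI impI is_lmap_kraus_map)
  fix k P assume "psd (k*n) P"
  then have P: "psd_kernel (k*n) (\<lambda>i j. P $$ (i,j))" by (simp add: psd_iff_psd_kernel)
  define X where "X \<sigma> r u = (if u div n = r div m then cnj (U $$ ((r mod m)*s+\<sigma>, u mod n)) else 0)"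
    for \<sigma> r u
  have "0 \<le> qform (k*m) (\<lambda>r t. ampl k n m (kraus_map n m s U d) P $$ (r,t)) v" for v
  proof -
    have "qform (k*m) (\<lambda>r t. ampl k n m (kraus_map n m s U d) P $$ (r,t)) v
        = qform (k*m) (\<lambda>r t. d * (\<Sum>\<sigma>\<in>{..<s}. \<Sum>u<k*n. \<Sum>u'<k*n. X \<sigma> r u * P $$ (u,u') * cnj (X \<sigma> t u'))) v"
      by (rule qform_cong) (auto simp: ampl_kraus_map_index X_def)
    also have "\<dots> = d * (\<Sum>\<sigma><s. qform (k*n) (\<lambda>i j. P $$ (i,j)) (\<lambda>u. \<Sum>t<k*m. cnj (X \<sigma> t u) * v t))"
      by (simp only: qform_scaled_sum qform_congruence)
    finally show ?thesis
      using P assms by (auto simp: psd_kernel_def intro!: mult_nonneg_nonneg sum_nonneg)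
  qed
  then show "psd (k*m) (ampl k n m (kraus_map n m s U d) P)"
    by (simp add: psd_iff_psd_kernel psd_kernel_def ampl_def)
qed

lemma mtrace_kraus_map:
  assumes "U \<in> carrier_mat (m*s) n"
  shows "mtrace (kraus_map n m s U d \<rho>) = d * (\<Sum>x<n. \<Sum>x'<n. \<rho> $$ (x,x') * (adj U * U) $$ (x,x'))"
proof -
  have "mtrace (kraus_map n m s U d \<rho>) = (\<Sum>a<m. d * (\<Sum>\<sigma><s. \<Sum>x<n. \<Sum>x'<n.
      \<rho> $$ (x,x') * cnj (U $$ (a*s+\<sigma>, x)) * U $$ (a*s+\<sigma>, x')))"
    unfolding mtrace_def by (simp add: kraus_map_index)
  also have "\<dots> = d * (\<Sum>x<n. \<Sum>x'<n. \<Sum>a<m. \<Sum>\<sigma><s.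
      \<rho> $$ (x,x') * (cnj (U $$ (a*s+\<sigma>, x)) * U $$ (a*s+\<sigma>, x')))"
    by (simp only: sum_distrib_left[symmetric] sum.swap[where A="{..<m}" and B="{..<n}"]
        sum.swap[where A="{..<s}" and B="{..<n}"] mult.assoc)
  also have "\<dots> = d * (\<Sum>x<n. \<Sum>x'<n. \<rho> $$ (x,x') * (adj U * U) $$ (x,x'))"
  proof -
    have "(\<Sum>a<m. \<Sum>\<sigma><s. \<rho> $$ (x,x') * (cnj (U $$ (a*s+\<sigma>, x)) * U $$ (a*s+\<sigma>, x')))
        = \<rho> $$ (x,x') * (adj U * U) $$ (x,x')" if "x < n" "x' < n" for x x'
      unfolding adj_mult_index_blocks[OF assms that] by (simp add: sum_distrib_left)
    then show ?thesis by simp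
  qed
  finally show ?thesis .
qed

lemma mtrace_kraus_map_munit:
  assumes "U \<in> carrier_mat (m*s) n" "x < n" "x' < n"
  shows "mtrace (kraus_map n m s U d (munit n x x')) = d * (adj U * U) $$ (x,x')"
  using assms
  by (simp add: mtrace_kraus_map if_distrib[of "\<lambda>c. c * _"] sum_delta_pair cong: if_cong)

lemma qchannel_kraus_map:
  assumes "U \<in> carrier_mat (m*s) n" "adj U * U = 1\<^sub>m n"
  shows "qchannel n m (kraus_map n m s U 1)"
proof -
  have "0 \<le> (1::complex)" by (simp add: complex_nonneg_iff)
  then show ?thesis
    using assms cp_kraus_map[of 1] mtrace_eq_pairing_one_mat
    by (simp add: qchannel_def tp_def mtrace_kraus_map)
qed

lemma mtrace_lsum_kraus_map:
  assumes U: "\<forall>i<N. U i \<in> carrier_mat (m * s i) n"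
    and U_iso: "mat n n (\<lambda>(x,x'). \<Sum>i<N. (adj (U i) * U i) $$ (x,x')) = 1\<^sub>m n"
    and \<rho>: "\<rho> \<in> carrier_mat n n"
  shows "mtrace (lsum n m {..<N} (\<lambda>i. kraus_map n m (s i) (U i) d) \<rho>) = d * mtrace \<rho>"
proof -
  have "mtrace (lsum n m {..<N} (\<lambda>i. kraus_map n m (s i) (U i) d) \<rho>)
      = (\<Sum>i<N. mtrace (kraus_map n m (s i) (U i) d \<rho>))"
    by (subst mtrace_lsum[OF \<rho>]) (simp add: mtrace_def sum.swap[of _ "{..<N}"])
  also have "\<dots> = d * (\<Sum>x<n. \<Sum>x'<n. \<rho> $$ (x,x') * (\<Sum>i<N. (adj (U i) * U i) $$ (x,x')))"
    using U by (simp add: mtrace_kraus_map sum_distrib_left sum_distrib_right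
        sum.swap[of _ "{..<N}"] mult.assoc)
  also have "\<dots> = d * (\<Sum>x<n. \<Sum>x'<n. \<rho> $$ (x,x') * 1\<^sub>m n $$ (x,x'))"
  proof -
    have "(\<Sum>i<N. (adj (U i) * U i) $$ (x,x')) = 1\<^sub>m n $$ (x,x')" if "x < n" "x' < n" for x x'
      using arg_cong[OF U_iso, of "\<lambda>M. M $$ (x,x')"] that by simp
    then show ?thesis by simp
  qed
  also have "\<dots> = d * mtrace \<rho>" using mtrace_eq_pairing_one_mat[OF \<rho>] by simp
  finally show ?thesis .
qed

section \<open>Block operator isometries\<close>

definition blk_gram :: "boi \<Rightarrow> nat \<Rightarrow> nat \<Rightarrow> nat \<Rightarrow> nat \<Rightarrow> complex mat" where
  "blk_gram W c z c' z' = adj (blk W c z) * blk W c' z'"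

lemma blk_gram_carrier: "blk_gram (h,l,M) c z c' z' \<in> carrier_mat h h"
  by (rule carrier_matI) (simp_all add: blk_gram_def)

lemma blk_gram_index:
  assumes "j < h" "j' < h"
  shows "blk_gram (h,l,M) c z c' z' $$ (j,j') = (\<Sum>k<l. cnj (M $$ (c*l+k, z*h+j)) * M $$ (c'*l+k, z'*h+j'))"
  unfolding blk_gram_def using assms by (subst adj_mult_index[where R=l]) auto

lemma Gamma_eq_blk_gram:
  "Gamma nZ nC W D = from_units nZ nC (\<lambda>z z'. mat nC nC (\<lambda>(c,c'). mtrace (D * blk_gram W c z c' z')))"
  by (cases W) (simp add: blk_gram_def del: blk.simps)

lemma Gamma_munit:
  assumes "p < nZ" "p' < nZ" "c < nC" "c' < nC"
  shows "Gamma nZ nC W D (munit nZ p p') $$ (c,c') = mtrace (D * blk_gram W c p c' p')"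
  using assms by (simp add: Gamma_eq_blk_gram from_units_munit)

lemma Gamma_eq_lsum_ltensorI:
  assumes "\<And>p p' c c'. p < nX*nY \<Longrightarrow> p' < nX*nY \<Longrightarrow> c < nA*nB \<Longrightarrow> c' < nA*nB \<Longrightarrow>
      Gamma (nX*nY) (nA*nB) W D (munit (nX*nY) p p') $$ (c,c')
      = (\<Sum>i<N. \<Psi> i (munit nX (p div nY) (p' div nY)) $$ (c div nB, c' div nB) *
          \<Phi> i (munit nY (p mod nY) (p' mod nY)) $$ (c mod nB, c' mod nB))"
  shows "Gamma (nX*nY) (nA*nB) W D = lsum (nX*nY) (nA*nB) {..<N} (\<lambda>i. ltensor nX nY nA nB (\<Psi> i) (\<Phi> i))"
proof -
  have "mtrace (D * blk_gram W c p c' p')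
      = (\<Sum>i<N. \<Psi> i (munit nX (p div nY) (p' div nY)) $$ (c div nB, c' div nB) *
          \<Phi> i (munit nY (p mod nY) (p' mod nY)) $$ (c mod nB, c' mod nB))"
    if "p < nX*nY" "p' < nX*nY" "c < nA*nB" "c' < nA*nB" for p p' c c'
    using assms[OF that] Gamma_munit[OF that] by simp
  then show ?thesis
    unfolding Gamma_eq_blk_gram lsum_ltensor by (intro from_units_eqI) simp
qed

lemma adj_mult_blk_gram:
  assumes M: "M \<in> carrier_mat (nC*l) (nZ*h)" and "z < nZ" "z' < nZ" "j < h" "j' < h"
  shows "(adj M * M) $$ (z*h+j, z'*h+j') = (\<Sum>c<nC. blk_gram (h,l,M) c z c z' $$ (j,j'))"
proof -
  have "(adj M * M) $$ (z*h+j, z'*h+j') = (\<Sum>r<nC*l. cnj (M $$ (r, z*h+j)) * M $$ (r, z'*h+j'))"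
    using assms mult_add_less[of z nZ j h] mult_add_less[of z' nZ j' h] by (intro adj_mult_index) auto
  also have "\<dots> = (\<Sum>c<nC. blk_gram (h,l,M) c z c z' $$ (j,j'))"
    using assms by (simp add: sum_lessThan_mult blk_gram_index)
  finally show ?thesis .
qed

lemma is_boi_iff_blk_gram:
  "is_boi nZ nC (h,l,M) \<longleftrightarrow> M \<in> carrier_mat (nC*l) (nZ*h) \<and>
     (\<forall>z<nZ. \<forall>z'<nZ. \<forall>j<h. \<forall>j'<h.
        (\<Sum>c<nC. blk_gram (h,l,M) c z c z' $$ (j,j')) = (if z = z' \<and> j = j' then 1 else 0))"
    (is "_ \<longleftrightarrow> _ \<and> ?gram")
proof (cases "M \<in> carrier_mat (nC*l) (nZ*h)")
  case M: True
  have "adj M * M = 1\<^sub>m (nZ*h) \<longleftrightarrow> ?gram"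
  proof
    assume I: "adj M * M = 1\<^sub>m (nZ*h)"
    show ?gram
    proof (intro allI impI)
      fix z z' j j' assume a: "z < nZ" "z' < nZ" "j < h" "j' < h"
      have "(\<Sum>c<nC. blk_gram (h,l,M) c z c z' $$ (j,j')) = (adj M * M) $$ (z*h+j, z'*h+j')"
        using adj_mult_blk_gram[OF M a] by simp
      also have "\<dots> = (if z = z' \<and> j = j' then 1 else 0)"
        using I a mult_add_less[of z nZ j h] mult_add_less[of z' nZ j' h] mult_add_eq_iff[OF a(3,4)]
        by simp
      finally show "(\<Sum>c<nC. blk_gram (h,l,M) c z c z' $$ (j,j')) = (if z = z' \<and> j = j' then 1 else 0)" .
    qed
  next
    assume gram: ?gram
    show "adj M * M = 1\<^sub>m (nZ*h)"
    proof (rule eq_matI)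
      fix r s assume "r < dim_row (1\<^sub>m (nZ*h))" "s < dim_col (1\<^sub>m (nZ*h))"
      then have rs: "r < nZ*h" "s < nZ*h" by auto
      then have d: "r div h < nZ" "s div h < nZ" "r mod h < h" "s mod h < h"
        by (simp_all add: div_less_of_less_mult mod_less_of_less_mult)
      have "(adj M * M) $$ (r div h * h + r mod h, s div h * h + s mod h)
          = (if r div h = s div h \<and> r mod h = s mod h then 1 else 0)"
        using gram d adj_mult_blk_gram[OF M d] by simp
      then show "(adj M * M) $$ (r,s) = 1\<^sub>m (nZ*h) $$ (r,s)"
        using rs div_mod_eq_iff[of r s h] by simp
    qed (use M in auto)
  qed
  then show ?thesis using M by simp
qed simp

lemma blk_bdsum_index:
  assumes "c < nC" "z < nZ" "k < l1+l2" "j < h1+h2"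
  shows "blk (bdsum nZ nC (h1,l1,M1) (h2,l2,M2)) c z $$ (k,j) =
    (if k < l1 \<and> j < h1 then M1 $$ (c*l1+k, z*h1+j)
     else if l1 \<le> k \<and> h1 \<le> j then M2 $$ (c*l2+(k-l1), z*h2+(j-h1)) else 0)"
  using assms mult_add_less[of c nC k "l1+l2"] mult_add_less[of z nZ j "h1+h2"]
  by (auto simp: Let_def add_diff_assoc)

lemma blk_gram_bdsum:
  assumes "c < nC" "c' < nC" "z < nZ" "z' < nZ" "j < h1+h2" "j' < h1+h2"
  shows "blk_gram (bdsum nZ nC (h1,l1,M1) (h2,l2,M2)) c z c' z' $$ (j,j') =
    (if j < h1 \<and> j' < h1 then blk_gram (h1,l1,M1) c z c' z' $$ (j,j')
     else if h1 \<le> j \<and> h1 \<le> j' then blk_gram (h2,l2,M2) c z c' z' $$ (j-h1,j'-h1) else 0)"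
proof -
  let ?B = "blk (bdsum nZ nC (h1,l1,M1) (h2,l2,M2))"
  have "blk_gram (bdsum nZ nC (h1,l1,M1) (h2,l2,M2)) c z c' z' $$ (j,j')
      = (\<Sum>k<l1+l2. cnj (?B c z $$ (k,j)) * ?B c' z' $$ (k,j'))"
    unfolding blk_gram_def using assms by (intro adj_mult_index) auto
  also have "\<dots> = (\<Sum>k<l1. cnj (?B c z $$ (k,j)) * ?B c' z' $$ (k,j'))
      + (\<Sum>k<l2. cnj (?B c z $$ (l1+k,j)) * ?B c' z' $$ (l1+k,j'))"
    by (rule sum_lessThan_add)
  also have "\<dots> = (if j < h1 \<and> j' < h1 then blk_gram (h1,l1,M1) c z c' z' $$ (j,j')
     else if h1 \<le> j \<and> h1 \<le> j' then blk_gram (h2,l2,M2) c z c' z' $$ (j-h1,j'-h1) else 0)"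
    using assms by (auto simp: blk_bdsum_index blk_gram_index simp del: blk.simps bdsum.simps)
  finally show ?thesis .
qed

lemma is_boi_bdsum:
  assumes "is_boi nZ nC (h1,l1,M1)" "is_boi nZ nC (h2,l2,M2)"
  shows "is_boi nZ nC (bdsum nZ nC (h1,l1,M1) (h2,l2,M2))"
proof -
  obtain M where B: "bdsum nZ nC (h1,l1,M1) (h2,l2,M2) = (h1+h2, l1+l2, M)"
    and M: "M \<in> carrier_mat (nC*(l1+l2)) (nZ*(h1+h2))" by simp
  have "(\<Sum>c<nC. blk_gram (h1+h2, l1+l2, M) c z c z' $$ (j,j')) = (if z = z' \<and> j = j' then 1 else 0)"
    if a: "z < nZ" "z' < nZ" "j < h1+h2" "j' < h1+h2" for z z' j j'
  proof -
    have "(\<Sum>c<nC. blk_gram (h1+h2, l1+l2, M) c z c z' $$ (j,j')) =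
       (\<Sum>c<nC. if j < h1 \<and> j' < h1 then blk_gram (h1,l1,M1) c z c z' $$ (j,j')
         else if h1 \<le> j \<and> h1 \<le> j' then blk_gram (h2,l2,M2) c z c z' $$ (j-h1,j'-h1) else 0)"
      using a unfolding B[symmetric] by (intro sum.cong refl blk_gram_bdsum) auto
    also have "\<dots> = (if z = z' \<and> j = j' then 1 else 0)"
      using assms a unfolding is_boi_iff_blk_gram
      by (cases "j < h1 \<and> j' < h1"; cases "h1 \<le> j \<and> h1 \<le> j'") (auto simp: less_diff_conv2)
    finally show ?thesis .
  qed
  then show ?thesis using M unfolding B is_boi_iff_blk_gram by blast
qed

definition upper_block :: "nat \<Rightarrow> complex mat \<Rightarrow> complex mat" where
  "upper_block h1 D = mat h1 h1 (\<lambda>(i,j). D $$ (i,j))"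

definition lower_block :: "nat \<Rightarrow> nat \<Rightarrow> complex mat \<Rightarrow> complex mat" where
  "lower_block h1 h2 D = mat h2 h2 (\<lambda>(i,j). D $$ (h1+i, h1+j))"

lemma mtrace_upper_lower_block:
  "D \<in> carrier_mat (h1+h2) (h1+h2) \<Longrightarrow> mtrace D = mtrace (upper_block h1 D) + mtrace (lower_block h1 h2 D)"
  by (simp add: mtrace_def upper_block_def lower_block_def sum_lessThan_add)

lemma psd_upper_block:
  assumes "psd (h1+h2) D"
  shows "psd h1 (upper_block h1 D)"
proof -
  have D: "psd_kernel (h1+h2) (\<lambda>i j. D $$ (i,j))" using assms by (simp add: psd_iff_psd_kernel)
  have "0 \<le> qform h1 (\<lambda>i j. upper_block h1 D $$ (i,j)) v" for v
  proof -
    define u where "u k = (if k < h1 then v k else 0)" for k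
    have "qform (h1+h2) (\<lambda>i j. D $$ (i,j)) u = (\<Sum>i<h1. \<Sum>j<h1. cnj (u i) * D $$ (i,j) * u j)"
      by (rule qform_support) (auto simp: u_def)
    also have "\<dots> = qform h1 (\<lambda>i j. upper_block h1 D $$ (i,j)) v"
      unfolding qform_def by (intro sum.cong refl) (simp add: u_def upper_block_def)
    finally show ?thesis using D unfolding psd_kernel_def by metis
  qed
  then show ?thesis by (simp add: psd_iff_psd_kernel psd_kernel_def upper_block_def)
qed

lemma psd_lower_block:
  assumes "psd (h1+h2) D"
  shows "psd h2 (lower_block h1 h2 D)"
proof -
  have D: "psd_kernel (h1+h2) (\<lambda>i j. D $$ (i,j))" using assms by (simp add: psd_iff_psd_kernel)
  have "0 \<le> qform h2 (\<lambda>i j. lower_block h1 h2 D $$ (i,j)) v" for v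
  proof -
    define u where "u k = (if h1 \<le> k then v (k - h1) else 0)" for k
    have "qform (h1+h2) (\<lambda>i j. D $$ (i,j)) u = qform h2 (\<lambda>i j. lower_block h1 h2 D $$ (i,j)) v"
      unfolding qform_def by (simp add: sum_lessThan_add u_def lower_block_def)
    then show ?thesis using D unfolding psd_kernel_def by metis
  qed
  then show ?thesis by (simp add: psd_iff_psd_kernel psd_kernel_def lower_block_def)
qed

lemma Gamma_bdsum_munit:
  assumes D: "D \<in> carrier_mat (h1+h2) (h1+h2)" and "c < nC" "c' < nC" "p < nZ" "p' < nZ"
  shows "Gamma nZ nC (bdsum nZ nC (h1,l1,M1) (h2,l2,M2)) D (munit nZ p p') $$ (c,c') =
    Gamma nZ nC (h1,l1,M1) (upper_block h1 D) (munit nZ p p') $$ (c,c')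
    + Gamma nZ nC (h2,l2,M2) (lower_block h1 h2 D) (munit nZ p p') $$ (c,c')"
proof -
  obtain M where B: "bdsum nZ nC (h1,l1,M1) (h2,l2,M2) = (h1+h2, l1+l2, M)" by simp
  have "mtrace (D * blk_gram (h1+h2, l1+l2, M) c p c' p')
      = (\<Sum>i<h1+h2. \<Sum>j<h1+h2. D $$ (i,j) * blk_gram (h1+h2, l1+l2, M) c p c' p' $$ (j,i))"
    by (rule mtrace_mult[OF D blk_gram_carrier])
  also have "\<dots> = (\<Sum>i<h1. \<Sum>j<h1. D $$ (i,j) * blk_gram (h1,l1,M1) c p c' p' $$ (j,i)) +
      (\<Sum>i<h2. \<Sum>j<h2. D $$ (h1+i,h1+j) * blk_gram (h2,l2,M2) c p c' p' $$ (j,i))"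
    unfolding B[symmetric] using assms by (simp add: sum_lessThan_add blk_gram_bdsum del: bdsum.simps)
  also have "\<dots> = mtrace (upper_block h1 D * blk_gram (h1,l1,M1) c p c' p')
      + mtrace (lower_block h1 h2 D * blk_gram (h2,l2,M2) c p c' p')"
    by (simp add: mtrace_mult[of _ h1] mtrace_mult[of _ h2] blk_gram_carrier upper_block_def lower_block_def)
  finally show ?thesis unfolding B Gamma_munit[OF assms(4,5,2,3)] .
qed
section \<open>The generators of \<open>R_lowc\<close>\<close>

definition lowc_gen_mat :: "nat \<Rightarrow> nat \<Rightarrow> nat \<Rightarrow> nat \<Rightarrow> nat \<Rightarrow> (nat \<Rightarrow> nat) \<Rightarrow> (nat \<Rightarrow> nat)
    \<Rightarrow> (nat \<Rightarrow> complex mat) \<Rightarrow> (nat \<Rightarrow> complex mat) \<Rightarrow> complex mat" where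
  "lowc_gen_mat nX nY nA nB n s t U V = snd (snd (lowc_gen nX nY nA nB n s t U V))"

lemma lowc_gen_eq:
  "lowc_gen nX nY nA nB n s t U V = (1, \<Sum>i<n. s i * t i, lowc_gen_mat nX nY nA nB n s t U V)"
  by (simp add: lowc_gen_def lowc_gen_mat_def Let_def)

lemma lowc_gen_mat_carrier:
  "lowc_gen_mat nX nY nA nB n s t U V \<in> carrier_mat (nA*nB*(\<Sum>i<n. s i * t i)) (nX*nY)"
  and lowc_gen_mat_dims [simp]:
  "dim_row (lowc_gen_mat nX nY nA nB n s t U V) = nA*nB*(\<Sum>i<n. s i * t i)"
  "dim_col (lowc_gen_mat nX nY nA nB n s t U V) = nX*nY"
  by (simp_all add: lowc_gen_def lowc_gen_mat_def Let_def)

lemma lowc_gen_mat_index: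
  assumes "c < nA*nB" "k < (\<Sum>i<n. s i * t i)" "z < nX*nY"
  shows "lowc_gen_mat nX nY nA nB n s t U V $$ (c * (\<Sum>i<n. s i * t i) + k, z) =
    (\<Sum>i<n. \<Sum>p<s i * t i. if k = (\<Sum>j<i. s j * t j) + p
       then U i $$ ((c div nB) * s i + p div t i, z div nY) * V i $$ ((c mod nB) * t i + p mod t i, z mod nY)
       else 0)"
proof -
  have dm: "(c * (\<Sum>i<n. s i * t i) + k) div (\<Sum>i<n. s i * t i) = c"
    "(c * (\<Sum>i<n. s i * t i) + k) mod (\<Sum>i<n. s i * t i) = k"
    using assms(2) by simp_all
  show ?thesis
    using assms mult_add_less[OF assms(1,2)]
    by (simp add: lowc_gen_def lowc_gen_mat_def Let_def) (simp only: dm)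
qed

lemma lowc_gen_mat_block:
  assumes "c < nA*nB" "z < nX*nY" "i < n" "p < s i * t i"
  shows "lowc_gen_mat nX nY nA nB n s t U V $$ (c * (\<Sum>i<n. s i * t i) + ((\<Sum>j<i. s j * t j) + p), z) =
    U i $$ ((c div nB) * s i + p div t i, z div nY) * V i $$ ((c mod nB) * t i + p mod t i, z mod nY)"
  using assms offset_less[of i n p "\<lambda>i. s i * t i"]
  by (simp add: lowc_gen_mat_index sum_offset_delta[where m="\<lambda>i. s i * t i"])

lemma lowc_gen_mat_inner:
  assumes c: "c < nA*nB" "c' < nA*nB" and z: "z < nX*nY" "z' < nX*nY"
  shows "(\<Sum>k<(\<Sum>i<n. s i * t i). cnj (lowc_gen_mat nX nY nA nB n s t U V $$ (c * (\<Sum>i<n. s i * t i) + k, z)) *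
            lowc_gen_mat nX nY nA nB n s t U V $$ (c' * (\<Sum>i<n. s i * t i) + k, z')) =
    (\<Sum>i<n. kraus_map nX nA (s i) (U i) 1 (munit nX (z div nY) (z' div nY)) $$ (c div nB, c' div nB) *
            kraus_map nY nB (t i) (V i) 1 (munit nY (z mod nY) (z' mod nY)) $$ (c mod nB, c' mod nB))"
proof -
  let ?G = "lowc_gen_mat nX nY nA nB n s t U V" and ?kd = "\<Sum>i<n. s i * t i"
  have b: "c div nB < nA" "c' div nB < nA" "c mod nB < nB" "c' mod nB < nB"
    "z div nY < nX" "z' div nY < nX" "z mod nY < nY" "z' mod nY < nY"
    using c z by (simp_all add: div_less_of_less_mult mod_less_of_less_mult)
  have "(\<Sum>k<?kd. cnj (?G $$ (c * ?kd + k, z)) * ?G $$ (c' * ?kd + k, z')) =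
     (\<Sum>i<n. \<Sum>p<s i * t i.
        cnj (U i $$ ((c div nB) * s i + p div t i, z div nY) * V i $$ ((c mod nB) * t i + p mod t i, z mod nY)) *
        (U i $$ ((c' div nB) * s i + p div t i, z' div nY) * V i $$ ((c' mod nB) * t i + p mod t i, z' mod nY)))"
    using c z by (simp add: sum_lessThan_sum lowc_gen_mat_block)
  also have "\<dots> = (\<Sum>i<n. \<Sum>\<sigma><s i. \<Sum>\<tau><t i.
      (cnj (U i $$ ((c div nB)*s i+\<sigma>, z div nY)) * U i $$ ((c' div nB)*s i+\<sigma>, z' div nY)) *
      (cnj (V i $$ ((c mod nB)*t i+\<tau>, z mod nY)) * V i $$ ((c' mod nB)*t i+\<tau>, z' mod nY)))"
    by (simp add: sum_lessThan_mult algebra_simps)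
  also have "\<dots> = (\<Sum>i<n. kraus_map nX nA (s i) (U i) 1 (munit nX (z div nY) (z' div nY)) $$ (c div nB, c' div nB) *
            kraus_map nY nB (t i) (V i) 1 (munit nY (z mod nY) (z' mod nY)) $$ (c mod nB, c' mod nB))"
    using b by (simp add: kraus_map_munit sum_product)
  finally show ?thesis .
qed

lemma blk_gram_lowc_gen:
  assumes "c < nA*nB" "c' < nA*nB" "z < nX*nY" "z' < nX*nY"
  shows "blk_gram (lowc_gen nX nY nA nB n s t U V) c z c' z' $$ (0,0) =
    (\<Sum>i<n. kraus_map nX nA (s i) (U i) 1 (munit nX (z div nY) (z' div nY)) $$ (c div nB, c' div nB) *
            kraus_map nY nB (t i) (V i) 1 (munit nY (z mod nY) (z' mod nY)) $$ (c mod nB, c' mod nB))"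
  unfolding lowc_gen_eq by (simp add: blk_gram_index lowc_gen_mat_inner[OF assms] del: blk.simps)

lemma Gamma_lowc_gen:
  assumes D: "D \<in> carrier_mat 1 1"
  shows "Gamma (nX*nY) (nA*nB) (lowc_gen nX nY nA nB n s t U V) D =
    lsum (nX*nY) (nA*nB) {..<n} (\<lambda>i. ltensor nX nY nA nB
      (kraus_map nX nA (s i) (U i) (D $$ (0,0))) (kraus_map nY nB (t i) (V i) 1))"
  unfolding Gamma_eq_blk_gram lsum_ltensor
proof (rule from_units_eqI)
  fix p p' c c' assume a: "p < nX*nY" "p' < nX*nY" "c < nA*nB" "c' < nA*nB"
  then have b: "p div nY < nX" "p' div nY < nX" "c div nB < nA" "c' div nB < nA"
    "p mod nY < nY" "p' mod nY < nY" "c mod nB < nB" "c' mod nB < nB"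
    by (simp_all add: div_less_of_less_mult mod_less_of_less_mult)
  have "mtrace (D * blk_gram (lowc_gen nX nY nA nB n s t U V) c p c' p')
      = D $$ (0,0) * blk_gram (lowc_gen nX nY nA nB n s t U V) c p c' p' $$ (0,0)"
    using D blk_gram_carrier[of 1] by (simp add: lowc_gen_eq mtrace_mult[of _ 1])
  then show "mat (nA*nB) (nA*nB) (\<lambda>(c,c'). mtrace (D * blk_gram (lowc_gen nX nY nA nB n s t U V) c p c' p')) $$ (c,c')
      = mat (nA*nB) (nA*nB) (\<lambda>(c,c'). \<Sum>i<n.
          kraus_map nX nA (s i) (U i) (D $$ (0,0)) (munit nX (p div nY) (p' div nY)) $$ (c div nB, c' div nB) *
          kraus_map nY nB (t i) (V i) 1 (munit nY (p mod nY) (p' mod nY)) $$ (c mod nB, c' mod nB)) $$ (c,c')"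
    using a b kraus_map_index_scale[of "c div nB" nA "c' div nB" nX _ _ "D $$ (0,0)"]
    by (simp add: blk_gram_lowc_gen sum_distrib_left mult.assoc)
qed

lemma adj_mult_lowc_gen_mat:
  assumes U: "\<forall>i<n. U i \<in> carrier_mat (nA * s i) nX"
    and V: "\<forall>i<n. V i \<in> carrier_mat (nB * t i) nY"
    and z: "z < nX*nY" "z' < nX*nY"
  shows "(adj (lowc_gen_mat nX nY nA nB n s t U V) * lowc_gen_mat nX nY nA nB n s t U V) $$ (z,z') =
    (\<Sum>i<n. (adj (U i) * U i) $$ (z div nY, z' div nY) * (adj (V i) * V i) $$ (z mod nY, z' mod nY))"
proof -
  let ?G = "lowc_gen_mat nX nY nA nB n s t U V" and ?kd = "\<Sum>i<n. s i * t i"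
  let ?KU = "\<lambda>i. kraus_map nX nA (s i) (U i) 1 (munit nX (z div nY) (z' div nY))"
  let ?KV = "\<lambda>i. kraus_map nY nB (t i) (V i) 1 (munit nY (z mod nY) (z' mod nY))"
  have b: "z div nY < nX" "z' div nY < nX" "z mod nY < nY" "z' mod nY < nY"
    using z by (simp_all add: div_less_of_less_mult mod_less_of_less_mult)
  have "(adj ?G * ?G) $$ (z,z') = (\<Sum>r<nA*nB*?kd. cnj (?G $$ (r,z)) * ?G $$ (r,z'))"
    using lowc_gen_mat_carrier z by (intro adj_mult_index) auto
  also have "\<dots> = (\<Sum>c<nA*nB. \<Sum>i<n. ?KU i $$ (c div nB, c div nB) * ?KV i $$ (c mod nB, c mod nB))"
    using z by (simp add: sum_lessThan_mult lowc_gen_mat_inner)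
  also have "\<dots> = (\<Sum>i<n. (\<Sum>a<nA. ?KU i $$ (a,a)) * (\<Sum>b<nB. ?KV i $$ (b,b)))"
    by (simp add: sum_lessThan_mult sum_product sum.swap[of _ "{..<n}"])
  also have "\<dots> = (\<Sum>i<n. mtrace (?KU i) * mtrace (?KV i))"
    by (simp add: mtrace_def)
  also have "\<dots> = (\<Sum>i<n. (adj (U i) * U i) $$ (z div nY, z' div nY) * (adj (V i) * V i) $$ (z mod nY, z' mod nY))"
    using U V b by (intro sum.cong refl) (simp add: mtrace_kraus_map_munit mult.commute[of nA] mult.commute[of nB])
  finally show ?thesis .
qed

lemma is_boi_lowc_gen:
  assumes U: "\<forall>i<n. U i \<in> carrier_mat (nA * s i) nX"
    and V: "\<forall>i<n. V i \<in> carrier_mat (nB * t i) nY"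
    and V_iso: "\<forall>i<n. adj (V i) * V i = 1\<^sub>m nY"
    and U_iso: "mat nX nX (\<lambda>(x,x'). \<Sum>i<n. (adj (U i) * U i) $$ (x,x')) = 1\<^sub>m nX"
  shows "is_boi (nX*nY) (nA*nB) (lowc_gen nX nY nA nB n s t U V)"
proof -
  let ?G = "lowc_gen_mat nX nY nA nB n s t U V"
  have "adj ?G * ?G = 1\<^sub>m (nX*nY)"
  proof (rule eq_matI)
    fix z z' assume "z < dim_row (1\<^sub>m (nX*nY))" "z' < dim_col (1\<^sub>m (nX*nY))"
    then have z: "z < nX*nY" "z' < nX*nY" by auto
    then have b: "z div nY < nX" "z' div nY < nX" "z mod nY < nY" "z' mod nY < nY"
      by (simp_all add: div_less_of_less_mult mod_less_of_less_mult)
    have "(\<Sum>i<n. (adj (U i) * U i) $$ (x,x')) = 1\<^sub>m nX $$ (x,x')" if "x < nX" "x' < nX" for x x'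
      using arg_cong[OF U_iso, of "\<lambda>M. M $$ (x,x')"] that by simp
    then show "(adj ?G * ?G) $$ (z,z') = 1\<^sub>m (nX*nY) $$ (z,z')"
      using z b V_iso div_mod_eq_iff[of z z' nY]
      by (simp add: adj_mult_lowc_gen_mat[OF U V z] sum_distrib_right[symmetric])
  qed (use lowc_gen_mat_carrier in auto)
  then show ?thesis using lowc_gen_mat_carrier by (simp add: lowc_gen_eq)
qed

lemma is_boi_R_lowc: "W \<in> R_lowc nX nY nA nB \<Longrightarrow> is_boi (nX*nY) (nA*nB) W"
proof (induction rule: R_lowc.induct)
  case (gen n U s V t)
  then show ?case by (intro is_boi_lowc_gen) auto
next
  case (dsum W1 W2)
  obtain h1 l1 M1 h2 l2 M2 where "W1 = (h1,l1,M1)" "W2 = (h2,l2,M2)" by (cases W1; cases W2)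
  then show ?case using dsum.IH by (simp only: is_boi_bdsum)
qed

section \<open>Channels realised by \<open>R_lowc\<close>\<close>

text \<open>The state is generalised to an arbitrary positive semidefinite \<open>D\<close>, with the trace
  condition scaled by \<open>tr D\<close>, so that the property passes to direct sums, where \<open>D\<close> splits
  into its diagonal blocks.\<close>
definition lowc_decomposable :: "nat \<Rightarrow> nat \<Rightarrow> nat \<Rightarrow> nat \<Rightarrow> boi \<Rightarrow> complex mat \<Rightarrow> bool" where
  "lowc_decomposable nX nY nA nB W D \<longleftrightarrow> (\<exists>N \<Psi> \<Phi>.
     (\<forall>i<N. cp nX nA (\<Psi> i)) \<and> (\<forall>i<N. qchannel nY nB (\<Phi> i)) \<and>
     (\<forall>\<rho>\<in>carrier_mat nX nX. mtrace (lsum nX nA {..<N} \<Psi> \<rho>) = mtrace D * mtrace \<rho>) \<and>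
     Gamma (nX*nY) (nA*nB) W D = lsum (nX*nY) (nA*nB) {..<N} (\<lambda>i. ltensor nX nY nA nB (\<Psi> i) (\<Phi> i)))"

lemma lowc_decomposable_lowc_gen:
  assumes U: "\<forall>i<n. U i \<in> carrier_mat (nA * s i) nX"
    and V: "\<forall>i<n. V i \<in> carrier_mat (nB * t i) nY"
    and V_iso: "\<forall>i<n. adj (V i) * V i = 1\<^sub>m nY"
    and U_iso: "mat nX nX (\<lambda>(x,x'). \<Sum>i<n. (adj (U i) * U i) $$ (x,x')) = 1\<^sub>m nX"
    and D: "psd 1 D"
  shows "lowc_decomposable nX nY nA nB (lowc_gen nX nY nA nB n s t U V) D"
proof -
  have D1: "D \<in> carrier_mat 1 1" using D by (simp add: psd_iff_psd_kernel)
  define d where "d = D $$ (0,0)"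
  have "0 \<le> d"
    using D psd_kernel_diag_nonneg[of 1 "\<lambda>i j. D $$ (i,j)" 0] by (simp add: psd_iff_psd_kernel d_def)
  have "mtrace D = d" using D1 by (simp add: mtrace_def d_def)
  define \<Psi> where "\<Psi> i = kraus_map nX nA (s i) (U i) d" for i
  define \<Phi> where "\<Phi> i = kraus_map nY nB (t i) (V i) 1" for i
  have "\<forall>\<rho>\<in>carrier_mat nX nX. mtrace (lsum nX nA {..<n} \<Psi> \<rho>) = mtrace D * mtrace \<rho>"
    using mtrace_lsum_kraus_map[OF U U_iso] \<open>mtrace D = d\<close> by (simp add: \<Psi>_def[abs_def])
  moreover have "\<forall>i<n. cp nX nA (\<Psi> i)" using cp_kraus_map[OF \<open>0 \<le> d\<close>] by (simp add: \<Psi>_def)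
  moreover have "\<forall>i<n. qchannel nY nB (\<Phi> i)" using qchannel_kraus_map V V_iso by (simp add: \<Phi>_def)
  moreover have "Gamma (nX*nY) (nA*nB) (lowc_gen nX nY nA nB n s t U V) D =
      lsum (nX*nY) (nA*nB) {..<n} (\<lambda>i. ltensor nX nY nA nB (\<Psi> i) (\<Phi> i))"
    unfolding Gamma_lowc_gen[OF D1] \<Psi>_def \<Phi>_def d_def ..
  ultimately show ?thesis unfolding lowc_decomposable_def by blast
qed

lemma lowc_decomposable_bdsum:
  assumes IH1: "\<And>D. psd h1 D \<Longrightarrow> lowc_decomposable nX nY nA nB (h1,l1,M1) D"
    and IH2: "\<And>D. psd h2 D \<Longrightarrow> lowc_decomposable nX nY nA nB (h2,l2,M2) D"
    and D: "psd (h1+h2) D"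
  shows "lowc_decomposable nX nY nA nB (bdsum (nX*nY) (nA*nB) (h1,l1,M1) (h2,l2,M2)) D"
proof -
  have D1: "D \<in> carrier_mat (h1+h2) (h1+h2)" using D by (simp add: psd_iff_psd_kernel)
  obtain N1 \<Psi>1 \<Phi>1 where A1: "\<forall>i<N1. cp nX nA (\<Psi>1 i)" "\<forall>i<N1. qchannel nY nB (\<Phi>1 i)"
     "\<forall>\<rho>\<in>carrier_mat nX nX. mtrace (lsum nX nA {..<N1} \<Psi>1 \<rho>) = mtrace (upper_block h1 D) * mtrace \<rho>"
     "Gamma (nX*nY) (nA*nB) (h1,l1,M1) (upper_block h1 D)
        = lsum (nX*nY) (nA*nB) {..<N1} (\<lambda>i. ltensor nX nY nA nB (\<Psi>1 i) (\<Phi>1 i))"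
    using IH1[OF psd_upper_block[OF D]] unfolding lowc_decomposable_def by blast
  obtain N2 \<Psi>2 \<Phi>2 where A2: "\<forall>i<N2. cp nX nA (\<Psi>2 i)" "\<forall>i<N2. qchannel nY nB (\<Phi>2 i)"
     "\<forall>\<rho>\<in>carrier_mat nX nX. mtrace (lsum nX nA {..<N2} \<Psi>2 \<rho>) = mtrace (lower_block h1 h2 D) * mtrace \<rho>"
     "Gamma (nX*nY) (nA*nB) (h2,l2,M2) (lower_block h1 h2 D)
        = lsum (nX*nY) (nA*nB) {..<N2} (\<lambda>i. ltensor nX nY nA nB (\<Psi>2 i) (\<Phi>2 i))"
    using IH2[OF psd_lower_block[OF D]] unfolding lowc_decomposable_def by blast
  define \<Psi> where "\<Psi> i = (if i < N1 then \<Psi>1 i else \<Psi>2 (i - N1))" for i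
  define \<Phi> where "\<Phi> i = (if i < N1 then \<Phi>1 i else \<Phi>2 (i - N1))" for i
  have "mtrace (lsum nX nA {..<N1+N2} \<Psi> \<rho>) = mtrace D * mtrace \<rho>" if \<rho>: "\<rho> \<in> carrier_mat nX nX" for \<rho>
  proof -
    have "mtrace (lsum nX nA {..<N1+N2} \<Psi> \<rho>)
        = mtrace (lsum nX nA {..<N1} \<Psi>1 \<rho>) + mtrace (lsum nX nA {..<N2} \<Psi>2 \<rho>)"
      using \<rho> by (simp add: mtrace_lsum sum_lessThan_add sum.distrib \<Psi>_def)
    also have "\<dots> = (mtrace (upper_block h1 D) + mtrace (lower_block h1 h2 D)) * mtrace \<rho>"
      using A1(3) A2(3) \<rho> by (simp add: algebra_simps)
    finally show ?thesis using mtrace_upper_lower_block[OF D1] by simp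
  qed
  moreover have "\<forall>i<N1+N2. cp nX nA (\<Psi> i)" using A1(1) A2(1) by (simp add: \<Psi>_def)
  moreover have "\<forall>i<N1+N2. qchannel nY nB (\<Phi> i)" using A1(2) A2(2) by (simp add: \<Phi>_def)
  moreover have "Gamma (nX*nY) (nA*nB) (bdsum (nX*nY) (nA*nB) (h1,l1,M1) (h2,l2,M2)) D =
      lsum (nX*nY) (nA*nB) {..<N1+N2} (\<lambda>i. ltensor nX nY nA nB (\<Psi> i) (\<Phi> i))"
    using A1(4) A2(4)
    by (intro Gamma_eq_lsum_ltensorI)
      (simp add: Gamma_bdsum_munit[OF D1] lsum_ltensor_munit sum_lessThan_add \<Psi>_def \<Phi>_def
        del: Gamma.simps bdsum.simps)
  ultimately show ?thesis unfolding lowc_decomposable_def by blast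
qed

lemma lowc_decomposable_R_lowc:
  "W \<in> R_lowc nX nY nA nB \<Longrightarrow> psd (fst W) D \<Longrightarrow> lowc_decomposable nX nY nA nB W D"
proof (induction arbitrary: D rule: R_lowc.induct)
  case (gen n U s V t)
  then show ?case by (intro lowc_decomposable_lowc_gen) (auto simp: lowc_gen_eq)
next
  case (dsum W1 W2)
  obtain h1 l1 M1 h2 l2 M2 where W: "W1 = (h1,l1,M1)" "W2 = (h2,l2,M2)" by (cases W1; cases W2)
  show ?case using dsum.IH dsum.prems unfolding W by (intro lowc_decomposable_bdsum) auto
qed

lemma QC_subset_Q_lowc: "QC (nX*nY) (nA*nB) (R_lowc nX nY nA nB) \<subseteq> Q_lowc nX nY nA nB"
proof
  fix \<Gamma> assume "\<Gamma> \<in> QC (nX*nY) (nA*nB) (R_lowc nX nY nA nB)"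
  then obtain W D where W: "W \<in> R_lowc nX nY nA nB" and D: "density (fst W) D"
    and \<Gamma>: "\<Gamma> = Gamma (nX*nY) (nA*nB) W D"
    unfolding QC_def by blast
  have "lowc_decomposable nX nY nA nB W D"
    using lowc_decomposable_R_lowc[OF W] D by (simp add: density_def)
  moreover have "mtrace D = 1" using D by (simp add: density_def)
  ultimately show "\<Gamma> \<in> Q_lowc nX nY nA nB"
    unfolding lowc_decomposable_def Q_lowc_def tp_def \<Gamma> by auto
qed

section \<open>Separation\<close>

definition coord_isometry :: "nat \<Rightarrow> nat \<Rightarrow> nat \<Rightarrow> complex mat" where
  "coord_isometry m n a = mat (m*n) n (\<lambda>(r,x). if r = a*n + x then 1 else 0)"

lemma coord_isometry_carrier: "coord_isometry m n a \<in> carrier_mat (m*n) n"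
  by (simp add: coord_isometry_def)

lemma coord_isometry_index:
  assumes "a' < m" "x' < n" "x < n"
  shows "coord_isometry m n a $$ (a'*n + x', x) = (if a' = a \<and> x' = x then 1 else 0)"
  using assms mult_add_less[OF assms(1,2)] mult_add_eq_iff[of x' n x a' a]
  by (simp add: coord_isometry_def)

lemma adj_mult_coord_isometry:
  assumes "a < m"
  shows "adj (coord_isometry m n a) * coord_isometry m n a = 1\<^sub>m n"
proof (rule eq_matI)
  fix x x' assume "x < dim_row (1\<^sub>m n)" "x' < dim_col (1\<^sub>m n)"
  then have x: "x < n" "x' < n" by auto
  have "(adj (coord_isometry m n a) * coord_isometry m n a) $$ (x,x')
      = (\<Sum>a'<m. \<Sum>y<n. cnj (coord_isometry m n a $$ (a'*n+y, x)) * coord_isometry m n a $$ (a'*n+y, x'))"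
    using x by (simp add: adj_mult_index_blocks[OF coord_isometry_carrier])
  also have "\<dots> = (\<Sum>a'<m. \<Sum>y<n. if a' = a \<and> y = x then (if x = x' then 1 else 0) else 0)"
    using x by (intro sum.cong refl) (auto simp: coord_isometry_index)
  also have "\<dots> = 1\<^sub>m n $$ (x,x')" using assms x by (simp add: sum_delta_pair)
  finally show "(adj (coord_isometry m n a) * coord_isometry m n a) $$ (x,x') = 1\<^sub>m n $$ (x,x')" .
qed (simp_all add: coord_isometry_def)

definition lowc_probe :: "nat \<Rightarrow> nat \<Rightarrow> nat \<Rightarrow> nat \<Rightarrow> nat \<Rightarrow> boi" where
  "lowc_probe nX nY nA nB c = lowc_gen nX nY nA nB 1 (\<lambda>_. nX) (\<lambda>_. nY)
     (\<lambda>_. coord_isometry nA nX (c div nB)) (\<lambda>_. coord_isometry nB nY (c mod nB))"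

lemma lowc_probe_in_R_lowc:
  assumes "c < nA*nB"
  shows "lowc_probe nX nY nA nB c \<in> R_lowc nX nY nA nB"
  unfolding lowc_probe_def
proof (rule R_lowc.gen)
  have "c div nB < nA" "c mod nB < nB"
    using assms by (simp_all add: div_less_of_less_mult mod_less_of_less_mult)
  then show "\<forall>i<(1::nat). adj (coord_isometry nB nY (c mod nB)) * coord_isometry nB nY (c mod nB) = 1\<^sub>m nY"
    and "mat nX nX (\<lambda>(x,x'). \<Sum>i<(1::nat). (adj (coord_isometry nA nX (c div nB)) * coord_isometry nA nX (c div nB)) $$ (x,x'))
      = 1\<^sub>m nX"
    by (auto intro!: eq_matI simp: adj_mult_coord_isometry card_lessThan)
qed (simp_all add: coord_isometry_carrier)

lemma lowc_probe_eq:
  "lowc_probe nX nY nA nB c = (1, nX*nY, snd (snd (lowc_probe nX nY nA nB c)))"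
  by (simp add: lowc_probe_def lowc_gen_eq)

lemma lowc_probe_index:
  assumes "c < nA*nB" "c' < nA*nB" "k < nX*nY" "z < nX*nY"
  shows "snd (snd (lowc_probe nX nY nA nB c)) $$ (c' * (nX*nY) + k, z) = (if z = k \<and> c' = c then 1 else 0)"
proof -
  have b: "c' div nB < nA" "c' mod nB < nB" "k div nY < nX" "k mod nY < nY" "z div nY < nX" "z mod nY < nY"
    using assms by (simp_all add: div_less_of_less_mult mod_less_of_less_mult)
  have "snd (snd (lowc_probe nX nY nA nB c)) $$ (c' * (nX*nY) + k, z)
    = coord_isometry nA nX (c div nB) $$ ((c' div nB) * nX + k div nY, z div nY)
      * coord_isometry nB nY (c mod nB) $$ ((c' mod nB) * nY + k mod nY, z mod nY)"
    using lowc_gen_mat_block[of c' nA nB z nX nY 0 1 "k" "\<lambda>_. nX" "\<lambda>_. nY"] assms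
    by (simp add: lowc_probe_def lowc_gen_eq)
  also have "\<dots> = (if z = k \<and> c' = c then 1 else 0)"
    using b div_mod_eq_iff[of c' c nB] div_mod_eq_iff[of k z nY] by (auto simp: coord_isometry_index)
  finally show ?thesis .
qed

lemma R_lowc_separating:
  assumes S: "S \<in> carrier_mat (nX*nY) (nA*nB)" and "S \<noteq> 0\<^sub>m (nX*nY) (nA*nB)"
  shows "\<exists>W\<in>R_lowc nX nY nA nB. phi (nX*nY) (nA*nB) W S \<noteq> 0\<^sub>m (fst (snd W)) (fst W)"
proof -
  obtain z0 c0 where zc: "z0 < nX*nY" "c0 < nA*nB" "S $$ (z0,c0) \<noteq> 0"
    using assms by (metis carrier_matD eq_matI index_zero_mat)
  have entry: "phi (nX*nY) (nA*nB) (lowc_probe nX nY nA nB c0) S $$ (z0,0) = S $$ (z0,c0)"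
    using zc by (subst lowc_probe_eq)
      (simp add: lowc_probe_index if_distrib[of "\<lambda>x. _ * x"] sum_delta_pair cong: if_cong)
  have "phi (nX*nY) (nA*nB) (lowc_probe nX nY nA nB c0) S \<noteq> 0\<^sub>m (nX*nY) 1"
  proof
    assume "phi (nX*nY) (nA*nB) (lowc_probe nX nY nA nB c0) S = 0\<^sub>m (nX*nY) 1"
    then have "phi (nX*nY) (nA*nB) (lowc_probe nX nY nA nB c0) S $$ (z0,0) = 0" using zc(1) by simp
    then show False using entry zc(3) by simp
  qed
  moreover have "fst (lowc_probe nX nY nA nB c0) = 1" "fst (snd (lowc_probe nX nY nA nB c0)) = nX*nY"
    by (simp_all add: lowc_probe_def lowc_gen_eq)
  ultimately show ?thesis
    using lowc_probe_in_R_lowc[OF zc(2)] by (intro bexI[of _ "lowc_probe nX nY nA nB c0"]) simp_all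
qed

section \<open>Kraus representation of completely positive maps\<close>

definition kraus_rep :: "nat \<Rightarrow> nat \<Rightarrow> lmap \<Rightarrow> nat \<Rightarrow> complex mat \<Rightarrow> bool" where
  "kraus_rep n m \<Psi> r U \<longleftrightarrow> U \<in> carrier_mat (m*r) n \<and>
     (\<forall>x<n. \<forall>x'<n. \<Psi> (munit n x x') = kraus_map n m r U 1 (munit n x x'))"

definition max_entangled :: "nat \<Rightarrow> complex mat" where
  "max_entangled n = mat (n*n) (n*n) (\<lambda>(u,v). if u div n = u mod n \<and> v div n = v mod n then 1 else 0)"

lemma psd_max_entangled: "psd (n*n) (max_entangled n)"
proof -
  let ?e = "\<lambda>u. u div n = u mod n"
  have "0 \<le> qform (n*n) (\<lambda>i j. max_entangled n $$ (i,j)) v" for v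
  proof -
    have "qform (n*n) (\<lambda>i j. max_entangled n $$ (i,j)) v
        = (\<Sum>u<n*n. \<Sum>w<n*n. (if ?e u then cnj (v u) else 0) * (if ?e w then v w else 0))"
      unfolding qform_def by (intro sum.cong refl) (auto simp: max_entangled_def)
    also have "\<dots> = (\<Sum>u<n*n. if ?e u then cnj (v u) else 0) * (\<Sum>w<n*n. if ?e w then v w else 0)"
      by (simp add: sum_product)
    also have "(\<Sum>u<n*n. if ?e u then cnj (v u) else 0) = cnj (\<Sum>w<n*n. if ?e w then v w else 0)"
      by (simp add: if_distrib cong: if_cong)
    finally show ?thesis by (simp only: cnj_mult_self_nonneg)
  qed
  then show ?thesis by (simp add: psd_iff_psd_kernel psd_kernel_def max_entangled_def)
qed

text \<open>Applying \<open>id \<otimes> \<Psi>\<close> to the maximally entangled vector gives the Choi matrix of \<open>\<Psi>\<close>.\<close>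
lemma ampl_max_entangled_index:
  assumes "r < n*m" "r' < n*m"
  shows "ampl n n m \<Psi> (max_entangled n) $$ (r,r') = \<Psi> (munit n (r div m) (r' div m)) $$ (r mod m, r' mod m)"
proof -
  have rd: "r div m < n" "r' div m < n" using assms by (simp_all add: div_less_of_less_mult)
  have "mat n n (\<lambda>(a,b). max_entangled n $$ ((r div m)*n + a, (r' div m)*n + b)) = munit n (r div m) (r' div m)"
  proof (rule eq_matI)
    fix a b assume "a < dim_row (munit n (r div m) (r' div m))" "b < dim_col (munit n (r div m) (r' div m))"
    then have ab: "a < n" "b < n" by (simp_all add: munit_def)
    then have "(r div m)*n + a < n*n" "(r' div m)*n + b < n*n" using rd by (simp_all add: mult_add_less)
    then show "mat n n (\<lambda>(a,b). max_entangled n $$ ((r div m)*n + a, (r' div m)*n + b)) $$ (a,b)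
        = munit n (r div m) (r' div m) $$ (a,b)"
      using ab by (auto simp: max_entangled_def)
  qed (simp_all add: munit_def)
  then show ?thesis using assms by (simp add: ampl_def)
qed

lemma cp_imp_kraus_rep:
  assumes "cp n m \<Psi>"
  shows "\<exists>r U. kraus_rep n m \<Psi> r U"
proof -
  define C where "C r r' = \<Psi> (munit n (r div m) (r' div m)) $$ (r mod m, r' mod m)" for r r'
  have "psd (n*m) (ampl n n m \<Psi> (max_entangled n))"
    using assms psd_max_entangled unfolding cp_def by blast
  then have "psd_kernel (n*m) (\<lambda>i j. ampl n n m \<Psi> (max_entangled n) $$ (i,j))"
    by (simp add: psd_iff_psd_kernel)
  moreover have "qform (n*m) (\<lambda>i j. ampl n n m \<Psi> (max_entangled n) $$ (i,j)) v = qform (n*m) C v" for v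
    by (rule qform_cong) (simp_all add: ampl_max_entangled_index C_def)
  ultimately have "psd_kernel (n*m) C" by (simp add: psd_kernel_def)
  then obtain r :: nat and M where M: "\<forall>i<n*m. \<forall>j<n*m. C i j = (\<Sum>\<sigma><r. M i \<sigma> * cnj (M j \<sigma>))"
    using psd_kernel_gram by blast
  define U where "U = mat (m*r) n (\<lambda>(row,x). cnj (M (x*m + row div r) (row mod r)))"
  have "\<Psi> (munit n x x') = kraus_map n m r U 1 (munit n x x')" if x: "x < n" "x' < n" for x x'
  proof (rule eq_matI)
    have "\<Psi> (munit n x x') \<in> carrier_mat m m"
      using assms x unfolding cp_def is_lmap_def by simp
    then show "dim_row (\<Psi> (munit n x x')) = dim_row (kraus_map n m r U 1 (munit n x x'))"
      and "dim_col (\<Psi> (munit n x x')) = dim_col (kraus_map n m r U 1 (munit n x x'))" by auto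
    fix a a' assume "a < dim_row (kraus_map n m r U 1 (munit n x x'))" "a' < dim_col (kraus_map n m r U 1 (munit n x x'))"
    then have a: "a < m" "a' < m" by auto
    have "\<Psi> (munit n x x') $$ (a,a') = C (x*m+a) (x'*m+a')" using a by (simp add: C_def)
    also have "\<dots> = (\<Sum>\<sigma><r. M (x*m+a) \<sigma> * cnj (M (x'*m+a') \<sigma>))"
      using M x a mult_add_less[of x n a m] mult_add_less[of x' n a' m] by simp
    also have "\<dots> = kraus_map n m r U 1 (munit n x x') $$ (a,a')"
      using x a by (simp add: kraus_map_munit U_def mult_add_less)
    finally show "\<Psi> (munit n x x') $$ (a,a') = kraus_map n m r U 1 (munit n x x') $$ (a,a')" .
  qed
  then have "kraus_rep n m \<Psi> r U" by (simp add: kraus_rep_def U_def)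
  then show ?thesis by blast
qed

lemma cp_family_kraus_rep:
  assumes "\<forall>i<N. cp n m (\<Psi> i)"
  shows "\<exists>r U. \<forall>i<N. kraus_rep n m (\<Psi> i) (r i) (U i)"
proof -
  have "\<forall>i\<in>{..<N}. \<exists>rU. kraus_rep n m (\<Psi> i) (fst rU) (snd rU)"
    using assms cp_imp_kraus_rep by fastforce
  from bchoice[OF this] obtain f where "\<forall>i\<in>{..<N}. kraus_rep n m (\<Psi> i) (fst (f i)) (snd (f i))"
    by blast
  then show ?thesis by (intro exI[of _ "fst \<circ> f"] exI[of _ "snd \<circ> f"]) simp
qed

lemma adj_mult_kraus_rep:
  assumes "kraus_rep n m \<Psi> r U" "x < n" "x' < n"
  shows "(adj U * U) $$ (x,x') = mtrace (\<Psi> (munit n x x'))"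
  using assms by (simp add: kraus_rep_def mtrace_kraus_map_munit)

lemma kraus_rep_isometry:
  assumes rep: "kraus_rep n m \<Phi> r V" and "tp n \<Phi>"
  shows "adj V * V = 1\<^sub>m n"
proof (rule eq_matI)
  fix y y' assume "y < dim_row (1\<^sub>m n)" "y' < dim_col (1\<^sub>m n)"
  then have y: "y < n" "y' < n" by auto
  then have "(adj V * V) $$ (y,y') = mtrace (\<Phi> (munit n y y'))"
    by (rule adj_mult_kraus_rep[OF rep])
  also have "\<dots> = 1\<^sub>m n $$ (y,y')"
    using assms(2) y by (simp add: tp_def mtrace_munit)
  finally show "(adj V * V) $$ (y,y') = 1\<^sub>m n $$ (y,y')" .
qed (use rep in \<open>auto simp: kraus_rep_def\<close>)

lemma kraus_rep_sum_isometry: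
  assumes rep: "\<forall>i<N. kraus_rep n m (\<Psi> i) (s i) (U i)" and lin: "\<forall>i<N. is_lmap n m (\<Psi> i)"
    and tp: "tp n (lsum n m {..<N} \<Psi>)"
  shows "mat n n (\<lambda>(x,x'). \<Sum>i<N. (adj (U i) * U i) $$ (x,x')) = 1\<^sub>m n"
proof (rule eq_matI)
  fix x x' assume "x < dim_row (1\<^sub>m n)" "x' < dim_col (1\<^sub>m n)"
  then have x: "x < n" "x' < n" by auto
  have "(adj (U i) * U i) $$ (x,x') = (\<Sum>a<m. \<Psi> i (munit n x x') $$ (a,a))" if "i < N" for i
  proof -
    have "\<Psi> i (munit n x x') \<in> carrier_mat m m"
      using lin that unfolding is_lmap_def by simp
    moreover have "(adj (U i) * U i) $$ (x,x') = mtrace (\<Psi> i (munit n x x'))"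
      using adj_mult_kraus_rep rep that x by blast
    ultimately show ?thesis by (simp add: mtrace_def)
  qed
  then have "(\<Sum>i<N. (adj (U i) * U i) $$ (x,x')) = mtrace (lsum n m {..<N} \<Psi> (munit n x x'))"
    by (simp add: mtrace_lsum sum.swap[of _ "{..<N}"])
  also have "\<dots> = 1\<^sub>m n $$ (x,x')" using tp x by (simp add: tp_def mtrace_munit)
  finally show "mat n n (\<lambda>(x,x'). \<Sum>i<N. (adj (U i) * U i) $$ (x,x')) $$ (x,x') = 1\<^sub>m n $$ (x,x')"
    using x by simp
qed auto

lemma Q_lowc_subset_QC: "Q_lowc nX nY nA nB \<subseteq> QC (nX*nY) (nA*nB) (R_lowc nX nY nA nB)"
proof
  fix \<Gamma> assume "\<Gamma> \<in> Q_lowc nX nY nA nB"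
  then obtain N \<Psi> \<Phi> where \<Gamma>: "\<Gamma> = lsum (nX*nY) (nA*nB) {..<N} (\<lambda>i. ltensor nX nY nA nB (\<Psi> i) (\<Phi> i))"
    and cp: "\<forall>i<N. cp nX nA (\<Psi> i)" and tp: "tp nX (lsum nX nA {..<N} \<Psi>)"
    and qc: "\<forall>i<N. qchannel nY nB (\<Phi> i)"
    unfolding Q_lowc_def by blast
  obtain s U where kU: "\<forall>i<N. kraus_rep nX nA (\<Psi> i) (s i) (U i)"
    using cp_family_kraus_rep[OF cp] by blast
  obtain t V where kV: "\<forall>i<N. kraus_rep nY nB (\<Phi> i) (t i) (V i)"
    using cp_family_kraus_rep qc unfolding qchannel_def by blast
  have "\<forall>i<N. adj (V i) * V i = 1\<^sub>m nY"
    using kV qc kraus_rep_isometry unfolding qchannel_def by blast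
  moreover have "mat nX nX (\<lambda>(x,x'). \<Sum>i<N. (adj (U i) * U i) $$ (x,x')) = 1\<^sub>m nX"
    using kraus_rep_sum_isometry[OF kU _ tp] cp by (simp add: cp_def)
  ultimately have W: "lowc_gen nX nY nA nB N s t U V \<in> R_lowc nX nY nA nB"
    using kU kV by (intro R_lowc.gen) (simp_all add: kraus_rep_def)
  have "Gamma (nX*nY) (nA*nB) (lowc_gen nX nY nA nB N s t U V) (1\<^sub>m 1) = \<Gamma>"
    unfolding Gamma_lowc_gen[OF one_carrier_mat] \<Gamma> using kU kV
    by (intro lsum_ltensor_cong) (simp_all add: kraus_rep_def)
  moreover have "density 1 (1\<^sub>m 1)"
    by (simp add: density_def psd_iff_psd_kernel psd_kernel_def qform_def mtrace_def cnj_mult_self_nonneg)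
  ultimately show "\<Gamma> \<in> QC (nX*nY) (nA*nB) (R_lowc nX nY nA nB)"
    unfolding QC_def using W by (force simp: lowc_gen_eq)
qed

theorem proposition5p10:
  fixes nX nY nA nB :: nat
  assumes "nX \<ge> 1" and "nY \<ge> 1" and "nA \<ge> 1" and "nB \<ge> 1"
  shows "is_resource (nX*nY) (nA*nB) (R_lowc nX nY nA nB) \<and>
         QC (nX*nY) (nA*nB) (R_lowc nX nY nA nB) = Q_lowc nX nY nA nB"
proof -
  have "is_resource (nX*nY) (nA*nB) (R_lowc nX nY nA nB)"
    unfolding is_resource_def
    using is_boi_R_lowc R_lowc.dsum R_lowc_separating by blast
  then show ?thesis using QC_subset_Q_lowc Q_lowc_subset_QC by blast
qed

end
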